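(* Let $\mathbf{E},\mathbf{F}$ be finite-dimensional Euclidean spaces, $\mathcal{K}\subset\mathbf{E}$ a proper cone, $\mathcal{A}:\mathbf{E}\to\mathbf{F}$ linear, $b\in\mathbf{F}$, $c\in\mathbf{E}$, and consider the conic program $\min\{\langle c,x\rangle:\mathcal{A}x=b,\ x\in\mathcal{K}\}$ with solution set $\mathcal{X}_\star$ and optimal value $p_\star$, and its dual $\max\{\langle b,y\rangle: c-\mathcal{A}^*y\in\mathcal{K}^*\}$. Suppose strong duality holds and dual strict complementarity holds for a solution pair $(x_\star,y_\star)$ with $s_\star=c-\mathcal{A}^*y_\star$, and suppose one of the following five cases pertains, with the corresponding function $f$: (1) $s_\star=0$: $f=0$; (2) $s_\star\in\mathrm{int}(\mathcal{K}^* )$: $f=c_\star\,\epsilon(x_+)$ with $c_\star=\sup_{x\in\mathcal{K}\setminus\{0\}}1/\langle s_\star,x/\|x\|_2\rangle$; (3) $\mathcal{K}=\mathbb{R}^n_+$, $s_\star\in\partial\mathcal{K}^*\setminus\{0\}$: $f=\epsilon(x_+)/s_{\min>0}$, $s_{\min>0}$ the smallest nonzero entry of $s_\star$; (4) $\mathcal{K}=\mathrm{SOC}^n=\{(x_{1:n},x_{n+1}):\|x_{1:n}\|_2\le x_{n+1}\}$, $s_\star\in\partial\mathcal{K}^*\setminus\{0\}$: $f=\sqrt{2\sqrt2\,\|x\|_2\,\epsilon(x_+)/\|s_\star\|_2}$; (5) $\mathcal{K}=\mathbb{S}^n_+$, $S_\star\in\partial\mathcal{K}^*\setminus\{0\}$: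 $f=\frac{\epsilon(X_+)}{T}+\sqrt{2\frac{\epsilon(X_+)}{T}\|X\|_{\mathrm{op}}}$, $T$ the smallest nonzero eigenvalue of $S_\star$. Then there exist constants $\gamma,\gamma'\ge0$ such that for all $x\in\mathbf{E}$, $$\mathrm{dist}(x,\mathcal{X}_\star)\le\kappa f+\gamma\|\mathcal{A}(x)-b\|_2+\kappa\|P_{\mathcal{V}_{s_\star}^\perp}(x_-)\|_2+\gamma'\|P_{\mathcal{V}_{s_\star}}(x_-)\|_2,$$ where $\kappa=1+\gamma\sigma_{\max}(\mathcal{A})$. In particular, when $\mathcal{X}_\star$ is a singleton, one may take $\gamma'=0$ and $\gamma=1/\sigma_{\min}(\mathcal{A}_{\mathcal{V}_{s_\star}})$. Furthermore $\epsilon(x_+)=\epsilon_{\mathrm{opt}}(x)+\langle y_\star,b-\mathcal{A}(x)\rangle-\langle s_\star,x_-\rangle$.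
   Context: $\mathcal{K}^*$ is the dual cone. Strong duality: primal and dual solution sets nonempty, $\mathcal{X}_\star$ compact, and a solution pair $(x_\star,y_\star)$ with $\langle s_\star,x_\star\rangle=0$, $s_\star=c-\mathcal{A}^*y_\star$. Complementary face $\mathcal{F}_{s_\star}=\{x\in\mathcal{K}:\langle x,s_\star\rangle=0\}$; complementary space $\mathcal{V}_{s_\star}=\mathrm{aff}(\mathcal{F}_{s_\star})$ (a linear subspace). Dual strict complementarity: $x_\star\in\mathrm{relint}(\mathcal{F}_{s_\star})$. Notation: $x_+=P_{\mathcal{K}}(x)$ (Euclidean projection), $x_-=x-x_+$, $\epsilon(x)=\langle s_\star,x\rangle$, $\epsilon_{\mathrm{opt}}(x)=\langle c,x\rangle-p_\star$. $\sigma_{\max}(\mathcal{A})=\max_{\|x\|_2=1}\|\mathcal{A}x\|_2$; $\sigma_{\min}(\mathcal{A}_{\mathcal{V}_{s_\star}})=\min_{x\in\mathcal{V}_{s_\star},\|x\|_2=1}\|\mathcal{A}x\|_2$. $\mathbb{R}^n$ uses the dot product, $\mathbb{S}^n$ the trace inner product; $\|\cdot\|_{\mathrm{op}}$ is the operator norm. $\mathrm{dist}(x,C)=\inf_{z\in C}\|x-z\|_2$. *)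

theory Defs
  imports "HOL-Analysis.Analysis"
begin

definition dual_cone :: "'a::real_inner set \<Rightarrow> 'a set" where
  "dual_cone K = {s. \<forall>x\<in>K. 0 \<le> s \<bullet> x}"

definition proper_cone :: "'a::real_normed_vector set \<Rightarrow> bool" where
  "proper_cone K \<longleftrightarrow> cone K \<and> convex K \<and> closed K \<and> interior K \<noteq> {}
      \<and> (\<forall>x. x \<in> K \<and> - x \<in> K \<longrightarrow> x = 0)"

definition primal_feasible :: "('e::euclidean_space \<Rightarrow> 'f::euclidean_space) \<Rightarrow> 'f \<Rightarrow> 'e set \<Rightarrow> 'e set" where
  "primal_feasible A b K = {x. A x = b \<and> x \<in> K}"

definition primal_value :: "('e::euclidean_space \<Rightarrow> 'f::euclidean_space) \<Rightarrow> 'f \<Rightarrow> 'e \<Rightarrow> 'e set \<Rightarrow> real" where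
  "primal_value A b c K = Inf ((\<lambda>x. c \<bullet> x) ` primal_feasible A b K)"

definition primal_solutions :: "('e::euclidean_space \<Rightarrow> 'f::euclidean_space) \<Rightarrow> 'f \<Rightarrow> 'e \<Rightarrow> 'e set \<Rightarrow> 'e set" where
  "primal_solutions A b c K =
     {x \<in> primal_feasible A b K. \<forall>z \<in> primal_feasible A b K. c \<bullet> x \<le> c \<bullet> z}"

definition dual_feasible :: "('e::euclidean_space \<Rightarrow> 'f::euclidean_space) \<Rightarrow> 'e \<Rightarrow> 'e set \<Rightarrow> 'f set" where
  "dual_feasible A c K = {y. c - adjoint A y \<in> dual_cone K}"

definition dual_solutions :: "('e::euclidean_space \<Rightarrow> 'f::euclidean_space) \<Rightarrow> 'f \<Rightarrow> 'e \<Rightarrow> 'e set \<Rightarrow> 'f set" where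
  "dual_solutions A b c K =
     {y \<in> dual_feasible A c K. \<forall>z \<in> dual_feasible A c K. b \<bullet> z \<le> b \<bullet> y}"

definition compl_face :: "'a::real_inner set \<Rightarrow> 'a \<Rightarrow> 'a set" where
  "compl_face K s = {x \<in> K. x \<bullet> s = 0}"

definition compl_space :: "'a::real_inner set \<Rightarrow> 'a \<Rightarrow> 'a set" where
  "compl_space K s = affine hull (compl_face K s)"

definition pos_part :: "'a::euclidean_space set \<Rightarrow> 'a \<Rightarrow> 'a" where
  "pos_part K x = closest_point K x"

definition neg_part :: "'a::euclidean_space set \<Rightarrow> 'a \<Rightarrow> 'a" where
  "neg_part K x = x - closest_point K x"

text \<open>Convention: for V = {0} the minimum over the empty unit sphere is +infinity;
  we encode this by the value 0, so that 1 / sigma_min = 0 (= 1/infinity) in HOL.\<close>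
definition sigma_max :: "('e::euclidean_space \<Rightarrow> 'f::euclidean_space) \<Rightarrow> real" where
  "sigma_max A = Sup ((\<lambda>x. norm (A x)) ` {x. norm x = 1})"

definition sigma_min_on :: "('e::euclidean_space \<Rightarrow> 'f::euclidean_space) \<Rightarrow> 'e set \<Rightarrow> real" where
  "sigma_min_on A V = (if V = {0} then 0 else Inf ((\<lambda>x. norm (A x)) ` {x \<in> V. norm x = 1}))"

definition isometric_onto :: "('e::real_inner \<Rightarrow> 'g::real_inner) \<Rightarrow> 'g set \<Rightarrow> bool" where
  "isometric_onto T S \<longleftrightarrow> linear T \<and> (\<forall>x y. T x \<bullet> T y = x \<bullet> y) \<and> range T = S"

definition case_zero :: "'e::euclidean_space set \<Rightarrow> 'e \<Rightarrow> ('e \<Rightarrow> real) \<Rightarrow> bool" where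
  "case_zero K s f \<longleftrightarrow> s = 0 \<and> f = (\<lambda>x. 0)"

definition interior_const :: "'e::euclidean_space set \<Rightarrow> 'e \<Rightarrow> real" where
  "interior_const K s = Sup ((\<lambda>x. 1 / (s \<bullet> (x /\<^sub>R norm x))) ` (K - {0}))"

definition case_interior :: "'e::euclidean_space set \<Rightarrow> 'e \<Rightarrow> ('e \<Rightarrow> real) \<Rightarrow> bool" where
  "case_interior K s f \<longleftrightarrow> s \<in> interior (dual_cone K)
     \<and> f = (\<lambda>x. interior_const K s * (s \<bullet> pos_part K x))"

text \<open>Case (3): K = R^n_+ (E identified isometrically with R^n via T),
  s in boundary of K^* minus 0, f = eps(x_+) / (smallest nonzero entry of s).\<close>
definition case_orthant :: "'e::euclidean_space set \<Rightarrow> 'e \<Rightarrow> ('e \<Rightarrow> real) \<Rightarrow> ('e \<Rightarrow> real^'n) \<Rightarrow> bool" where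
  "case_orthant K s f T \<longleftrightarrow> isometric_onto T UNIV
     \<and> K = T -` {v. \<forall>i. 0 \<le> v $ i}
     \<and> s \<in> frontier (dual_cone K) - {0}
     \<and> f = (\<lambda>x. (s \<bullet> pos_part K x) / Inf {T s $ i | i. T s $ i \<noteq> 0})"

definition case_soc :: "'e::euclidean_space set \<Rightarrow> 'e \<Rightarrow> ('e \<Rightarrow> real) \<Rightarrow> ('e \<Rightarrow> (real^'n::finite) \<times> real) \<Rightarrow> bool" where
  "case_soc K s f T \<longleftrightarrow> isometric_onto T UNIV
     \<and> K = T -` {(u, t). norm u \<le> t}
     \<and> s \<in> frontier (dual_cone K) - {0}
     \<and> f = (\<lambda>x. sqrt (2 * sqrt 2 * norm x * (s \<bullet> pos_part K x) / norm s))"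

text \<open>Case (5): K = S^n_+, E identified isometrically (trace inner product) with the
  symmetric n x n matrices.\<close>
definition psd :: "real^'n^'n \<Rightarrow> bool" where
  "psd M \<longleftrightarrow> transpose M = M \<and> (\<forall>v. 0 \<le> v \<bullet> (M *v v))"

definition min_nonzero_eig :: "real^'n^'n \<Rightarrow> real" where
  "min_nonzero_eig M = Inf {l. l \<noteq> 0 \<and> (\<exists>v. v \<noteq> 0 \<and> M *v v = l *\<^sub>R v)}"

definition case_psd :: "'e::euclidean_space set \<Rightarrow> 'e \<Rightarrow> ('e \<Rightarrow> real) \<Rightarrow> ('e \<Rightarrow> real^'n^'n) \<Rightarrow> bool" where
  "case_psd K s f T \<longleftrightarrow> isometric_onto T {M. transpose M = M}
     \<and> K = T -` {M. psd M}
     \<and> s \<in> frontier (dual_cone K) - {0}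
     \<and> f = (\<lambda>x. (s \<bullet> pos_part K x) / min_nonzero_eig (T s)
              + sqrt (2 * ((s \<bullet> pos_part K x) / min_nonzero_eig (T s)) * onorm (\<lambda>v. T x *v v)))"

end

theory Submission
  imports Defs
begin

(* By complementary slackness the solution set is the slice {x \<in> F. A x = b} of the
   complementary face F = K \<inter> s\<^sup>\<bottom>, and strict complementarity places xs in the relative
   interior of F. Hence a point of F with residual r can be moved into the solution set at cost
   O(r): correct the residual inside span F and pull towards xs. Far from the solution set this
   is replaced by the trivial bound, which is linear in r because compactness of the solution
   set leaves no nonzero point of F in the kernel of A (a Hoffman-type bound on F).
   For arbitrary x split x = x\<^sub>+ + x\<^sub>- (Moreau) and x\<^sub>- along span F and its orthogonal
   complement; in each of the five cases an explicit point of F near x\<^sub>+ shows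
   dist(x\<^sub>+, F) \<le> f x, and the triangle inequality gives the bound. The identity for
   s \<bullet> x\<^sub>+ is the expansion of s = c - A\<^sup>* ys together with p\<^sub>\<star> = ys \<bullet> b. *)

section \<open>Projections, cones and convex sets\<close>

lemma closest_point_subspace:
  fixes U :: "'a::euclidean_space set"
  assumes U: "subspace U"
  shows "closest_point U v \<in> U" and "\<And>u. u \<in> U \<Longrightarrow> (v - closest_point U v) \<bullet> u = 0"
proof -
  obtain y z where y: "y \<in> span U" and z: "\<And>w. w \<in> span U \<Longrightarrow> orthogonal z w"
    and v: "v = y + z"
    using orthogonal_subspace_decomp_exists by blast
  have yU: "y \<in> U" using y U by (metis span_eq_iff)
  have orth: "(v - y) \<bullet> u = 0" if "u \<in> U" for u
    using z[of u] that v span_base by (auto simp: orthogonal_def)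
  have "dist v y \<le> dist v w" if w: "w \<in> U" for w
  proof -
    have "(v - y) \<bullet> (y - w) = 0" using orth U yU w by (simp add: subspace_diff)
    then have "(dist v w)\<^sup>2 = (dist v y)\<^sup>2 + (norm (y - w))\<^sup>2"
      using norm_add_Pythagorean[of "v - y" "y - w"] by (simp add: dist_norm orthogonal_def)
    then have "(dist v y)\<^sup>2 \<le> (dist v w)\<^sup>2" by simp
    then show ?thesis by (rule power2_le_imp_le) simp
  qed
  then have "y = closest_point U v"
    using yU U by (intro closest_point_unique) (auto simp: subspace_imp_convex closed_subspace)
  then show "closest_point U v \<in> U" "\<And>u. u \<in> U \<Longrightarrow> (v - closest_point U v) \<bullet> u = 0"
    using yU orth by auto
qed

lemma norm_closest_point_subspace_le:
  fixes U :: "'a::euclidean_space set"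
  assumes "subspace U"
  shows "norm (closest_point U v) \<le> norm v"
proof -
  let ?p = "closest_point U v"
  have "(v - ?p) \<bullet> ?p = 0" using closest_point_subspace[OF assms] by blast
  then have "(norm v)\<^sup>2 = (norm ?p)\<^sup>2 + (norm (v - ?p))\<^sup>2"
    using norm_add_Pythagorean[of ?p "v - ?p"] by (simp add: orthogonal_def inner_commute)
  then show ?thesis by (simp add: power2_le_imp_le)
qed

lemma closest_point_orthogonal_comp:
  fixes U :: "'a::euclidean_space set"
  assumes U: "subspace U"
  shows "closest_point (orthogonal_comp U) v = v - closest_point U v"
proof -
  let ?p = "closest_point U v"
  have pU: "?p \<in> U" and orth: "\<And>u. u \<in> U \<Longrightarrow> (v - ?p) \<bullet> u = 0"
    using closest_point_subspace[OF U] by auto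
  have mem: "v - ?p \<in> orthogonal_comp U"
    using orth by (auto simp: orthogonal_comp_def orthogonal_def inner_commute)
  have "dist v (v - ?p) \<le> dist v w" if w: "w \<in> orthogonal_comp U" for w
  proof -
    have "?p \<bullet> w = 0" using w pU by (auto simp: orthogonal_comp_def orthogonal_def)
    then have "?p \<bullet> (v - ?p - w) = 0" using orth[OF pU] by (simp add: inner_diff_right inner_commute)
    then have "(dist v w)\<^sup>2 = (norm ?p)\<^sup>2 + (norm (v - ?p - w))\<^sup>2"
      using norm_add_Pythagorean[of ?p "v - ?p - w"] by (simp add: dist_norm orthogonal_def)
    then have "(norm ?p)\<^sup>2 \<le> (dist v w)\<^sup>2" by simp
    then show ?thesis by (simp add: dist_norm power2_le_iff_abs_le)
  qed
  then show ?thesis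
    using mem closest_point_unique subspace_orthogonal_comp
    by (metis closed_subspace subspace_imp_convex)
qed

lemma inner_closest_point_subspace_split:
  fixes N :: "'a::euclidean_space set"
  assumes N: "subspace N"
  defines "P \<equiv> closest_point N"
  shows "v \<bullet> P u = P v \<bullet> P u"
    and "v \<bullet> u = P v \<bullet> P u + (v - P v) \<bullet> (u - P u)"
    and "(v - P v) \<bullet> u = v \<bullet> (u - P u)"
proof -
  have orth: "(a - P a) \<bullet> P b = 0" for a b using closest_point_subspace[OF N] by (simp add: P_def)
  show "v \<bullet> P u = P v \<bullet> P u" using orth[of v u] by (simp add: inner_diff_left)
  show "v \<bullet> u = P v \<bullet> P u + (v - P v) \<bullet> (u - P u)"
    using orth[of v u] orth[of u v] by (simp add: inner_diff_left inner_diff_right inner_commute)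
  show "(v - P v) \<bullet> u = v \<bullet> (u - P u)"
    using orth[of v u] orth[of u v] by (simp add: inner_diff_left inner_diff_right inner_commute)
qed

lemma dist_closest_point_eq_infdist:
  fixes S :: "'a::euclidean_space set"
  assumes "closed S" "S \<noteq> {}"
  shows "dist y (closest_point S y) = infdist y S"
proof (rule antisym)
  show "infdist y S \<le> dist y (closest_point S y)"
    using closest_point_in_set[OF assms] by (rule infdist_le)
  show "dist y (closest_point S y) \<le> infdist y S"
    unfolding infdist_notempty[OF assms(2)]
    using closest_point_le[OF assms(1)] assms(2) by (intro cINF_greatest) auto
qed

lemma closest_point_cone:
  fixes K :: "'a::euclidean_space set"
  assumes cl: "closed K" and cv: "convex K" and cn: "cone K" and ne: "K \<noteq> {}"
  shows "closest_point K x \<in> K"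
    and "(x - closest_point K x) \<bullet> closest_point K x = 0"
    and "\<And>k. k \<in> K \<Longrightarrow> (x - closest_point K x) \<bullet> k \<le> 0"
    and "norm (closest_point K x) \<le> norm x"
proof -
  let ?p = "closest_point K x"
  show pK: "?p \<in> K" using closest_point_in_set[OF cl ne] .
  have z: "0 \<in> K" using cn ne by (simp add: cone_contains_0)
  have "(x - ?p) \<bullet> (0 - ?p) \<le> 0" using closest_point_dot[OF cv cl z] .
  moreover have "2 *\<^sub>R ?p \<in> K" using cn pK unfolding cone_def by simp
  then have "(x - ?p) \<bullet> (2 *\<^sub>R ?p - ?p) \<le> 0" using closest_point_dot[OF cv cl] by blast
  ultimately show o: "(x - ?p) \<bullet> ?p = 0" by (simp add: inner_diff_right algebra_simps)
  show "(x - ?p) \<bullet> k \<le> 0" if "k \<in> K" for k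
    using closest_point_dot[OF cv cl that, of x] o by (simp add: inner_diff_right)
  have "dist ?p (closest_point K 0) \<le> dist x 0"
    using closest_point_lipschitz[OF cv cl ne] .
  then show "norm ?p \<le> norm x" using closest_point_self[OF z] by simp
qed

lemma convex_pull_toward_relative_interior:
  fixes C V :: "'a::real_normed_vector set"
  assumes C: "convex C" and V: "subspace V" and x0: "x0 \<in> C" "C \<subseteq> V" and e: "e > 0"
    and ball: "\<And>z. z \<in> V \<Longrightarrow> norm (z - x0) < e \<Longrightarrow> z \<in> C"
    and p: "p \<in> C" and w: "w \<in> V"
  obtains t where "0 \<le> t" "t \<le> 1" "t * e \<le> 2 * norm w" "(1 - t) *\<^sub>R (p - w) + t *\<^sub>R x0 \<in> C"
proof (cases "w = 0")
  case True
  then show ?thesis using that[of 0] p by simp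
next
  case False
  define t where "t = norm w / (e/2 + norm w)"
  define z where "z = x0 - (e / 2 / norm w) *\<^sub>R w"
  have den: "e/2 + norm w > 0" using e by (simp add: add_pos_nonneg)
  have t: "0 \<le> t" "t \<le> 1" using den e by (auto simp: t_def divide_le_eq)
  have "t * e = norm w * e / (e/2 + norm w)" by (simp add: t_def)
  also have "\<dots> \<le> norm w * e / (e/2)" using e den by (intro divide_left_mono) auto
  finally have te: "t * e \<le> 2 * norm w" using e by simp
  have "z \<in> V" using x0 w V by (auto simp: z_def intro: subspace_diff subspace_scale)
  then have "z \<in> C" using ball False e by (simp add: z_def)
  have "e + norm w * 2 > 0" using e by (simp add: add_pos_nonneg)
  then have h: "t * (e / 2 / norm w) = 1 - t" using False by (simp add: t_def field_simps)
  have "(1 - t) *\<^sub>R (p - w) + t *\<^sub>R x0 = (1 - t) *\<^sub>R p - (t * (e / 2 / norm w)) *\<^sub>R w + t *\<^sub>R x0"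
    unfolding h by (simp add: algebra_simps)
  also have "\<dots> = (1 - t) *\<^sub>R p + t *\<^sub>R z" by (simp add: z_def algebra_simps)
  also have "\<dots> \<in> C" using C p \<open>z \<in> C\<close> t by (simp add: convex_def)
  finally show ?thesis using that t te by blast
qed

section \<open>Real inequalities\<close>

text \<open>The bound \<open>d \<le> B\<close> serves when \<open>\<kappa> r > 1\<close>, the bound quadratic in \<open>r\<close> when \<open>\<kappa> r \<le> 1\<close>.\<close>

lemma le_linear_of_near_far_bounds:
  fixes d B r \<kappa> \<beta> \<mu> \<nu> :: real
  assumes nonneg: "0 \<le> r" "0 \<le> \<kappa>" "0 \<le> \<beta>" "0 \<le> \<mu>" "0 \<le> \<nu>"
    and B: "B \<le> \<beta> + \<mu> * r" and far: "d \<le> B" and near: "d \<le> \<kappa> * r * B + \<nu> * r"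
  shows "d \<le> (\<kappa> * \<beta> + \<mu> + \<nu>) * r"
proof -
  have sum: "(\<kappa> * \<beta> + \<mu> + \<nu>) * r = \<kappa> * \<beta> * r + \<mu> * r + \<nu> * r" by (simp add: algebra_simps)
  show ?thesis
  proof (cases "\<kappa> * r \<le> 1")
    case True
    have "\<kappa> * r * B \<le> \<kappa> * r * (\<beta> + \<mu> * r)" using B nonneg by (simp add: mult_left_mono)
    also have "\<dots> = \<kappa> * \<beta> * r + (\<kappa> * r) * (\<mu> * r)" by (simp add: algebra_simps)
    also have "(\<kappa> * r) * (\<mu> * r) \<le> \<mu> * r" using True nonneg by (intro mult_left_le_one_le) auto
    finally show ?thesis using near sum by linarith
  next
    case False
    then have "\<beta> * 1 \<le> \<beta> * (\<kappa> * r)" using nonneg by (intro mult_left_mono) auto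
    then have "\<beta> \<le> \<kappa> * \<beta> * r" by (simp add: mult_ac)
    moreover have "0 \<le> \<nu> * r" using nonneg by simp
    ultimately show ?thesis using far B sum by linarith
  qed
qed

lemma quadratic_nonneg_imp_linear_coeff_zero:
  fixes a b :: real
  assumes "\<And>t. 0 \<le> a * t + b * t\<^sup>2"
  shows "a = 0"
proof (rule ccontr)
  assume "a \<noteq> 0"
  then have a2: "a * a > 0" by (metis not_real_square_gt_zero)
  show False
  proof (cases "b \<le> 0")
    case True
    have "0 \<le> a * (-a) + b * (-a)\<^sup>2" using assms by blast
    moreover have "b * (-a)\<^sup>2 \<le> 0" using True by (simp add: mult_nonpos_nonneg)
    ultimately show False using a2 by simp
  next
    case False
    have "0 \<le> a * (-a/(2*b)) + b * (-a/(2*b))\<^sup>2" using assms by blast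
    also have "\<dots> = - (a*a) / (4*b)" using False by (simp add: power2_eq_square field_simps)
    finally have "a * a / (4 * b) \<le> 0" by simp
    moreover have "a * a / (4 * b) > 0" using a2 False by simp
    ultimately show False by simp
  qed
qed

lemma quadratic_nonneg_imp_discriminant_le:
  fixes a b c :: real
  assumes nonneg: "\<And>t. 0 \<le> a + 2 * b * t + c * t\<^sup>2"
  shows "b\<^sup>2 \<le> a * c"
proof (cases "c = 0")
  case True
  have "b = 0"
  proof (rule ccontr)
    assume "b \<noteq> 0"
    have "0 \<le> a + 2 * b * (- (\<bar>a\<bar> + 1) / (2 * b))"
      using nonneg[of "- (\<bar>a\<bar> + 1) / (2 * b)"] True by simp
    then show False using \<open>b \<noteq> 0\<close> by simp
  qed
  then show ?thesis using True by simp
next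
  case False
  have "c \<ge> 0"
  proof (rule ccontr)
    assume "\<not> c \<ge> 0"
    define t where "t = (\<bar>a\<bar> + 2 * \<bar>b\<bar> + 1) / (- c) + 1"
    have "(\<bar>a\<bar> + 2 * \<bar>b\<bar> + 1) / (- c) \<ge> 0" using \<open>\<not> c \<ge> 0\<close> by (intro divide_nonneg_pos) auto
    then have t1: "t \<ge> 1" by (simp add: t_def)
    have ct: "c * t = - (\<bar>a\<bar> + 2 * \<bar>b\<bar> + 1) + c" using \<open>\<not> c \<ge> 0\<close> by (simp add: t_def field_simps)
    have "a + 2 * b * t + c * t\<^sup>2 \<le> \<bar>a\<bar> * t + 2 * \<bar>b\<bar> * t + c * t * t"
    proof -
      have "a \<le> \<bar>a\<bar> * t" using t1 by (smt (verit) mult_le_cancel_left1)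
      moreover have "2 * b * t \<le> 2 * \<bar>b\<bar> * t" using t1 by (simp add: mult_right_mono)
      ultimately show ?thesis by (simp add: power2_eq_square mult.assoc)
    qed
    also have "\<dots> = t * (\<bar>a\<bar> + 2 * \<bar>b\<bar> + c * t)" by (simp add: algebra_simps)
    also have "\<dots> < 0" using t1 ct \<open>\<not> c \<ge> 0\<close> by (simp add: mult_pos_neg)
    finally show False using nonneg[of t] by simp
  qed
  then have cp: "c > 0" using False by simp
  have "0 \<le> a + 2 * b * (- b / c) + c * (- b / c)\<^sup>2" using nonneg by blast
  also have "\<dots> = a - b\<^sup>2 / c" using cp by (simp add: power2_eq_square field_simps)
  finally show ?thesis using cp by (simp add: field_simps)
qed

section \<open>Linear maps and isometries\<close>

lemma norm_linear_normalize:
  assumes "linear A" "x \<noteq> 0"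
  shows "norm (A (x /\<^sub>R norm x)) = norm (A x) / norm x"
  using assms by (simp add: linear_scale divide_inverse_commute)

lemma linear_bounded_below_on_cone:
  fixes A :: "'a::euclidean_space \<Rightarrow> 'b::euclidean_space"
  assumes S: "closed S" "cone S" and lin: "linear A"
    and inj: "\<And>x. x \<in> S \<Longrightarrow> A x = 0 \<Longrightarrow> x = 0"
  shows "\<exists>m>0. \<forall>x\<in>S. m * norm x \<le> norm (A x)"
proof -
  let ?C = "S \<inter> sphere 0 1"
  have scale: "x /\<^sub>R norm x \<in> ?C" if "x \<in> S" "x \<noteq> 0" for x
    using S(2) that by (auto simp: cone_def)
  show ?thesis
  proof (cases "?C = {}")
    case True
    then show ?thesis using scale by (intro exI[of _ 1]) force
  next
    case False
    have "continuous_on ?C (\<lambda>x. norm (A x))"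
      using lin by (intro continuous_on_norm linear_continuous_on) (simp add: linear_conv_bounded_linear)
    then obtain x0 where x0: "x0 \<in> ?C" and min: "\<And>y. y \<in> ?C \<Longrightarrow> norm (A x0) \<le> norm (A y)"
      using continuous_attains_inf[OF closed_Int_compact[OF S(1)] False] by fastforce
    have pos: "norm (A x0) > 0" using x0 inj by fastforce
    have "norm (A x0) * norm x \<le> norm (A x)" if "x \<in> S" for x
    proof (cases "x = 0")
      case False
      have "norm (A x0) \<le> norm (A x) / norm x"
        using min[OF scale[OF that False]] unfolding norm_linear_normalize[OF lin False] .
      then show ?thesis using False by (simp add: field_simps)
    qed simp
    then show ?thesis using pos by blast
  qed
qed

lemma norm_le_sigma_max_unit:
  fixes A :: "'a::euclidean_space \<Rightarrow> 'b::euclidean_space"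
  assumes "linear A" "norm u = 1"
  shows "norm (A u) \<le> sigma_max A"
proof -
  obtain B where B: "\<And>x. norm (A x) \<le> B * norm x" using linear_bounded[OF assms(1)] by blast
  have "bdd_above ((\<lambda>x. norm (A x)) ` {x. norm x = 1})"
    using B by (intro bdd_aboveI[of _ B]) (metis (mono_tags) imageE mem_Collect_eq mult.right_neutral)
  then show ?thesis unfolding sigma_max_def using assms(2) by (intro cSUP_upper) auto
qed

lemma sigma_max_nonneg:
  fixes A :: "'a::euclidean_space \<Rightarrow> 'b::euclidean_space"
  assumes "linear A"
  shows "0 \<le> sigma_max A"
proof -
  obtain e :: 'a where "e \<in> Basis" using nonempty_Basis by blast
  then have "norm (A e) \<le> sigma_max A" by (intro norm_le_sigma_max_unit[OF assms]) simp
  then show ?thesis using norm_ge_zero[of "A e"] by linarith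
qed

lemma norm_le_sigma_max:
  fixes A :: "'a::euclidean_space \<Rightarrow> 'b::euclidean_space"
  assumes lin: "linear A"
  shows "norm (A v) \<le> sigma_max A * norm v"
proof (cases "v = 0")
  case True
  then show ?thesis using lin by (simp add: linear_0)
next
  case False
  have "norm (A (v /\<^sub>R norm v)) \<le> sigma_max A" using False by (intro norm_le_sigma_max_unit[OF lin]) simp
  then have "norm (A v) / norm v \<le> sigma_max A" unfolding norm_linear_normalize[OF lin False] .
  then show ?thesis using False by (simp add: field_simps)
qed

lemma unit_vector_in_subspace:
  fixes V :: "'a::euclidean_space set"
  assumes "subspace V" "V \<noteq> {0}"
  shows "{x \<in> V. norm x = 1} \<noteq> {}"
proof -
  obtain u where u: "u \<in> V" "u \<noteq> 0" using assms subspace_0 by blast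
  then have "u /\<^sub>R norm u \<in> {x \<in> V. norm x = 1}" using assms(1) by (simp add: subspace_scale)
  then show ?thesis by blast
qed

lemma sigma_min_on_nonneg:
  fixes A :: "'a::euclidean_space \<Rightarrow> 'b::euclidean_space"
  assumes "subspace V"
  shows "0 \<le> sigma_min_on A V"
  using unit_vector_in_subspace[OF assms] unfolding sigma_min_on_def by (auto intro!: cINF_greatest)

lemma norm_le_sigma_min_on:
  fixes A :: "'a::euclidean_space \<Rightarrow> 'b::euclidean_space"
  assumes V: "subspace V" and lin: "linear A"
    and inj: "\<And>v. v \<in> V \<Longrightarrow> A v = 0 \<Longrightarrow> v = 0" and v: "v \<in> V"
  shows "norm v \<le> (1 / sigma_min_on A V) * norm (A v)"
proof (cases "V = {0} \<or> v = 0")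
  case True
  then show ?thesis using v lin by (auto simp: linear_0)
next
  case False
  let ?S = "(\<lambda>x. norm (A x)) ` {x \<in> V. norm x = 1}"
  obtain m where m: "m > 0" "\<And>x. x \<in> V \<Longrightarrow> m * norm x \<le> norm (A x)"
    using linear_bounded_below_on_cone[OF closed_subspace[OF V] subspace_imp_cone[OF V] lin inj] by blast
  have "m \<le> Inf ?S"
    using unit_vector_in_subspace[OF V] False m by (intro cINF_greatest) force+
  moreover have "Inf ?S \<le> norm (A (v /\<^sub>R norm v))"
    using V v False by (intro cINF_lower) (auto intro: bdd_belowI[of _ 0] simp: subspace_scale)
  moreover have "norm (A (v /\<^sub>R norm v)) = norm (A v) / norm v"
    using False by (intro norm_linear_normalize[OF lin]) simp
  ultimately show ?thesis using False m(1) by (simp add: sigma_min_on_def field_simps)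
qed

text \<open>Take the preimage orthogonal to \<open>V \<inter> ker A\<close>.\<close>

lemma linear_bounded_preimage_in_subspace:
  fixes A :: "'a::euclidean_space \<Rightarrow> 'b::euclidean_space"
  assumes V: "subspace V" and lin: "linear A"
  obtains m where "m > 0" "\<And>d. d \<in> V \<Longrightarrow> \<exists>w\<in>V. A w = A d \<and> m * norm w \<le> norm (A d)"
proof -
  define N where "N = V \<inter> {x. A x = 0}"
  have N: "subspace N"
    unfolding N_def using V real_vector.linear_subspace_kernel[OF lin] by (rule subspace_inter)
  define W where "W = V \<inter> orthogonal_comp N"
  have W: "subspace W" unfolding W_def using V subspace_orthogonal_comp by (rule subspace_inter)
  have "x = 0" if "x \<in> W" "A x = 0" for x
  proof -
    have "x \<in> N" "x \<in> orthogonal_comp N" using that by (auto simp: W_def N_def)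
    then show ?thesis by (auto simp: orthogonal_comp_def orthogonal_def)
  qed
  then obtain m where m: "m > 0" "\<And>x. x \<in> W \<Longrightarrow> m * norm x \<le> norm (A x)"
    using linear_bounded_below_on_cone[OF closed_subspace[OF W] subspace_imp_cone[OF W] lin] by blast
  have "\<exists>w\<in>V. A w = A d \<and> m * norm w \<le> norm (A d)" if d: "d \<in> V" for d
  proof -
    define w where "w = d - closest_point N d"
    have k: "closest_point N d \<in> N" "\<And>u. u \<in> N \<Longrightarrow> w \<bullet> u = 0"
      using closest_point_subspace[OF N] by (auto simp: w_def)
    have "w \<in> V" using d k(1) V by (auto simp: w_def N_def intro: subspace_diff)
    moreover have "w \<in> W" using calculation k(2)
      by (auto simp: W_def orthogonal_comp_def orthogonal_def inner_commute)
    moreover have "A w = A d" using k(1) lin by (simp add: w_def N_def linear_diff)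
    ultimately show ?thesis using m(2) by metis
  qed
  then show ?thesis using m(1) that by blast
qed

lemma isometric_ontoD:
  assumes "isometric_onto T S"
  shows "linear T" and "T x \<bullet> T y = x \<bullet> y" and "range T = S" and "norm (T x) = norm x"
    and "norm (T x - T y) = norm (x - y)"
proof -
  show "linear T" "range T = S" using assms by (auto simp: isometric_onto_def)
  show inner: "T x \<bullet> T y = x \<bullet> y" for x y using assms by (auto simp: isometric_onto_def)
  show norm: "norm (T x) = norm x" for x using inner by (simp add: norm_eq_sqrt_inner)
  show "norm (T x - T y) = norm (x - y)"
    using norm assms by (metis linear_diff isometric_onto_def)
qed

lemma dual_cone_via_isometry:
  assumes "isometric_onto T S" "K = T -` C" "s \<in> dual_cone K" "z \<in> S" "z \<in> C"
  shows "0 \<le> T s \<bullet> z"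
proof -
  obtain k where k: "T k = z" using assms(4) isometric_ontoD(3)[OF assms(1)] by blast
  then have "0 \<le> s \<bullet> k" using assms(2,3,5) by (auto simp: dual_cone_def)
  then show ?thesis using isometric_ontoD(2)[OF assms(1), of s k] k by simp
qed

lemma infdist_compl_face_via_isometry:
  assumes "isometric_onto T S" "K = T -` C" "z \<in> S" "z \<in> C" "T s \<bullet> z = 0"
  shows "infdist y (compl_face K s) \<le> norm (T y - z)"
proof -
  obtain k where k: "T k = z" using assms(3) isometric_ontoD(3)[OF assms(1)] by blast
  have "k \<bullet> s = 0" using isometric_ontoD(2)[OF assms(1), of s k] k assms(5) by (simp add: inner_commute)
  then have "k \<in> compl_face K s" using assms(2,4) k by (simp add: compl_face_def)
  then have "infdist y (compl_face K s) \<le> norm (y - k)" using infdist_le by (metis dist_norm)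
  also have "\<dots> = norm (T y - z)" using isometric_ontoD(5)[OF assms(1), of y k] k by simp
  finally show ?thesis .
qed

lemma interior_dual_cone_via_isometry:
  assumes T: "isometric_onto T UNIV" and K: "K = T -` C" and r: "r > 0"
    and ball: "ball (T s) r \<subseteq> D" and D: "\<And>d z. d \<in> D \<Longrightarrow> z \<in> C \<Longrightarrow> 0 \<le> d \<bullet> z"
  shows "s \<in> interior (dual_cone K)"
proof -
  have "s' \<in> dual_cone K" if "s' \<in> ball s r" for s'
  proof -
    have "T s' \<in> D"
      using that ball isometric_ontoD(5)[OF T, of s s'] by (auto simp: dist_norm)
    show ?thesis
      unfolding dual_cone_def
    proof (intro CollectI ballI)
      fix k assume "k \<in> K"
      then have "T k \<in> C" using K by simp
      then have "0 \<le> T s' \<bullet> T k" using D[OF \<open>T s' \<in> D\<close>] by blast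
      then show "0 \<le> s' \<bullet> k" using isometric_ontoD(2)[OF T, of s' k] by simp
    qed
  qed
  then show ?thesis using r by (auto simp: mem_interior)
qed

lemma interior_dual_cone_coercive:
  fixes K :: "'a::real_inner set"
  assumes "s \<in> interior (dual_cone K)"
  obtains r where "r > 0" "\<And>y. y \<in> K \<Longrightarrow> r * norm y \<le> s \<bullet> y"
proof -
  obtain r where r: "r > 0" "ball s r \<subseteq> dual_cone K" using assms by (auto simp: mem_interior)
  have "(r/2) * norm y \<le> s \<bullet> y" if y: "y \<in> K" for y
  proof (cases "y = 0")
    case False
    have "s - ((r/2) / norm y) *\<^sub>R y \<in> dual_cone K" using r False by (auto simp: dist_norm)
    then have "0 \<le> (s - ((r/2) / norm y) *\<^sub>R y) \<bullet> y" using y by (simp add: dual_cone_def)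
    also have "\<dots> = s \<bullet> y - (r/2) * norm y"
      using False by (simp add: inner_diff_left power2_norm_eq_inner[symmetric] power2_eq_square)
    finally show ?thesis by simp
  qed simp
  then show ?thesis using that[of "r/2"] r(1) by simp
qed

lemma norm_le_interior_const:
  fixes K :: "'a::euclidean_space set"
  assumes s: "s \<in> interior (dual_cone K)" and y: "y \<in> K"
  shows "norm y \<le> interior_const K s * (s \<bullet> y)"
proof (cases "y = 0")
  case False
  obtain r where r: "r > 0" "\<And>y. y \<in> K \<Longrightarrow> r * norm y \<le> s \<bullet> y"
    using interior_dual_cone_coercive[OF s] by blast
  have ratio: "1 / (s \<bullet> (x /\<^sub>R norm x)) = norm x / (s \<bullet> x)" if "x \<noteq> 0" for x
    using that by (simp add: divide_inverse_commute)
  have "norm x / (s \<bullet> x) \<le> 1 / r" if "x \<in> K - {0}" for x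
  proof -
    have "r * norm x \<le> s \<bullet> x" "0 < r * norm x" using r that by auto
    then have "norm x / (s \<bullet> x) \<le> norm x / (r * norm x)" by (intro divide_left_mono) auto
    then show ?thesis using that by simp
  qed
  then have "bdd_above ((\<lambda>x. 1 / (s \<bullet> (x /\<^sub>R norm x))) ` (K - {0}))"
    using ratio by (intro bdd_aboveI[of _ "1/r"]) auto
  then have "norm y / (s \<bullet> y) \<le> interior_const K s"
    unfolding interior_const_def using y False ratio[OF False, symmetric] by (auto intro: cSUP_upper2)
  moreover have "s \<bullet> y > 0" using r(1) r(2)[OF y] False by (smt (verit) mult_pos_pos zero_less_norm_iff)
  ultimately show ?thesis by (simp add: divide_le_eq)
qed simp

section \<open>Positive semidefinite matrices\<close>

definition outer :: "real^'n \<Rightarrow> real^'n \<Rightarrow> real^'n^'n" where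
  "outer a b = (\<chi> i j. a $ i * b $ j)"

lemma outer_mult_vec: "outer a b *v v = (b \<bullet> v) *\<^sub>R a"
  by (simp add: vec_eq_iff outer_def matrix_vector_mult_def inner_vec_def sum_distrib_left mult_ac)

lemma inner_outer: "M \<bullet> outer a b = a \<bullet> (M *v b)"
  by (simp add: inner_vec_def outer_def matrix_vector_mult_def sum_distrib_left mult_ac)

lemma inner_outer_outer: "outer a b \<bullet> outer c d = (a \<bullet> c) * (b \<bullet> d)"
  by (simp add: inner_outer outer_mult_vec inner_commute)

lemma transpose_outer_self: "transpose (outer a a) = outer a a"
  by (simp add: transpose_def outer_def vec_eq_iff mult.commute)

lemma outer_scaleR_self: "outer (r *\<^sub>R a) (r *\<^sub>R a) = r\<^sup>2 *\<^sub>R outer a a"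
  by (simp add: outer_def vec_eq_iff power2_eq_square mult_ac)

lemma sum_matrix_vector_mult: "(\<Sum>k\<in>A. M k) *v v = (\<Sum>k\<in>A. M k *v v)"
  by (induct A rule: infinite_finite_induct) (simp_all add: matrix_vector_mult_add_rdistrib)

lemma sum_outer_mult_vec: "(\<Sum>k\<in>A. outer (w k) (w k)) *v v = (\<Sum>k\<in>A. (w k \<bullet> v) *\<^sub>R w k)"
  by (simp add: sum_matrix_vector_mult outer_mult_vec)

lemma inner_sum_outer_sum_outer:
  "(\<Sum>k<m. outer (a k) (a k)) \<bullet> (\<Sum>l<m. outer (b l) (b l)) = (\<Sum>k<m. \<Sum>l<m. (a k \<bullet> b l)\<^sup>2)"
  by (simp add: inner_sum_left inner_sum_right inner_outer_outer power2_eq_square) (rule sum.swap)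

lemma symmetric_matrix_inner_commute:
  fixes M :: "real^'n^'n"
  assumes "transpose M = M"
  shows "(M *v a) \<bullet> b = a \<bullet> (M *v b)"
proof -
  have "M *v a = a v* M" using transpose_matrix_vector[of M a] assms by simp
  then show ?thesis by (simp add: dot_lmul_matrix)
qed

lemma quadratic_form_add_scaleR:
  fixes M :: "real^'n^'n"
  assumes "transpose M = M"
  shows "(v + t *\<^sub>R w) \<bullet> (M *v (v + t *\<^sub>R w))
           = v \<bullet> (M *v v) + 2 * t * (w \<bullet> (M *v v)) + t\<^sup>2 * (w \<bullet> (M *v w))"
proof -
  have "v \<bullet> (M *v w) = w \<bullet> (M *v v)"
    using symmetric_matrix_inner_commute[OF assms, of w v] by (simp add: inner_commute)
  then show ?thesis
    by (simp add: matrix_vector_right_distrib matrix_vector_mult_scaleR inner_add_left inner_add_right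
        power2_eq_square algebra_simps)
qed

lemma psd_entry_commute: "psd Y \<Longrightarrow> Y $ i $ j = Y $ j $ i"
  unfolding psd_def by (metis transpose_def vec_lambda_beta)

lemma psd_outer_self: "psd (outer a a)"
  unfolding psd_def by (simp add: transpose_outer_self outer_mult_vec inner_commute)

lemma psd_add: "psd M \<Longrightarrow> psd N \<Longrightarrow> psd (M + N)"
  unfolding psd_def
  by (simp add: transpose_def vec_eq_iff matrix_vector_mult_add_rdistrib inner_add_right)

lemma psd_sum_outer: "psd (\<Sum>k\<in>A. outer (w k) (w k))"
proof (induct A rule: infinite_finite_induct)
  case (insert k A)
  then show ?case by (simp add: psd_add psd_outer_self)
qed (simp_all add: psd_def transpose_def vec_eq_iff)

lemma psd_null_vector:
  fixes M :: "real^'n^'n"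
  assumes psd: "psd M" and v: "v \<bullet> (M *v v) = 0"
  shows "M *v v = 0"
proof -
  have sym: "transpose M = M" using psd by (simp add: psd_def)
  let ?w = "M *v v"
  have "0 \<le> (2 * (?w \<bullet> (M *v v))) * t + (?w \<bullet> (M *v ?w)) * t\<^sup>2" for t
  proof -
    have "0 \<le> (v + t *\<^sub>R ?w) \<bullet> (M *v (v + t *\<^sub>R ?w))" using psd unfolding psd_def by blast
    then show ?thesis using quadratic_form_add_scaleR[OF sym, of v t ?w] v by (simp add: algebra_simps)
  qed
  then have "2 * (?w \<bullet> (M *v v)) = 0" by (rule quadratic_nonneg_imp_linear_coeff_zero)
  then show ?thesis by simp
qed

lemma psd_cauchy_schwarz:
  fixes M :: "real^'n^'n"
  assumes psd: "psd M"
  shows "(u \<bullet> (M *v w))\<^sup>2 \<le> (u \<bullet> (M *v u)) * (w \<bullet> (M *v w))"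
proof -
  have sym: "transpose M = M" using psd by (simp add: psd_def)
  have "0 \<le> u \<bullet> (M *v u) + 2 * (w \<bullet> (M *v u)) * t + (w \<bullet> (M *v w)) * t\<^sup>2" for t
  proof -
    have "0 \<le> (u + t *\<^sub>R w) \<bullet> (M *v (u + t *\<^sub>R w))" using psd unfolding psd_def by blast
    then show ?thesis using quadratic_form_add_scaleR[OF sym, of u t w] by (simp add: algebra_simps)
  qed
  then have "(w \<bullet> (M *v u))\<^sup>2 \<le> (u \<bullet> (M *v u)) * (w \<bullet> (M *v w))"
    by (rule quadratic_nonneg_imp_discriminant_le)
  moreover have "w \<bullet> (M *v u) = u \<bullet> (M *v w)"
    using symmetric_matrix_inner_commute[OF sym, of w u] by (simp add: inner_commute)
  ultimately show ?thesis by simp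
qed

text \<open>One step of a Cholesky factorisation (Schur complement). It also clears row and column \<open>i\<close>,
  which drives the induction below.\<close>

lemma psd_rank_one_downdate:
  fixes Y :: "real^'n^'n"
  assumes psd: "psd Y" and d: "Y $ i $ i > 0"
  defines "c \<equiv> Y *v axis i 1"
  shows "psd (Y - (1 / Y $ i $ i) *\<^sub>R outer c c)"
proof -
  let ?d = "Y $ i $ i"
  have cj: "c $ j = Y $ j $ i" for j by (simp add: c_def matrix_vector_mult_basis column_def)
  have sym: "transpose Y = Y" using psd by (simp add: psd_def)
  show ?thesis
    unfolding psd_def
  proof
    show "transpose (Y - (1 / ?d) *\<^sub>R outer c c) = Y - (1 / ?d) *\<^sub>R outer c c"
      using sym by (simp add: transpose_def vec_eq_iff outer_def mult.commute psd_entry_commute[OF psd])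
    show "\<forall>v. 0 \<le> v \<bullet> ((Y - (1 / ?d) *\<^sub>R outer c c) *v v)"
    proof
      fix v
      have cv: "c \<bullet> v = axis i 1 \<bullet> (Y *v v)"
        unfolding c_def by (rule symmetric_matrix_inner_commute[OF sym])
      have "axis i 1 \<bullet> (Y *v axis i 1) = ?d" using cj[of i] by (simp add: c_def[symmetric] inner_axis')
      then have "(c \<bullet> v)\<^sup>2 \<le> ?d * (v \<bullet> (Y *v v))" using psd_cauchy_schwarz[OF psd, of "axis i 1" v] cv by simp
      then have "(c \<bullet> v)\<^sup>2 / ?d \<le> v \<bullet> (Y *v v)" using d by (simp add: divide_le_eq mult.commute)
      moreover have "v \<bullet> ((Y - (1 / ?d) *\<^sub>R outer c c) *v v) = v \<bullet> (Y *v v) - (c \<bullet> v)\<^sup>2 / ?d"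
        by (simp add: matrix_vector_mult_diff_rdistrib outer_mult_vec inner_diff_right
            scaleR_matrix_vector_assoc[symmetric] inner_commute power2_eq_square)
      ultimately show "0 \<le> v \<bullet> ((Y - (1 / ?d) *\<^sub>R outer c c) *v v)" by simp
    qed
  qed
qed

lemma psd_diagonal_nonneg:
  fixes Y :: "real^'n^'n"
  assumes "psd Y"
  shows "0 \<le> Y $ i $ i"
proof -
  have "0 \<le> axis i 1 \<bullet> (Y *v axis i 1)" using assms unfolding psd_def by blast
  then show ?thesis by (simp add: inner_axis' matrix_vector_mult_basis column_def)
qed

lemma psd_column_zero_if_diagonal_zero:
  fixes Y :: "real^'n^'n"
  assumes psd: "psd Y" and "Y $ i $ i = 0"
  shows "Y $ j $ i = 0"
proof -
  have "axis i 1 \<bullet> (Y *v axis i 1) = 0" using assms(2) by (simp add: inner_axis' matrix_vector_mult_basis column_def)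
  then have "Y *v axis i 1 = 0" by (rule psd_null_vector[OF psd])
  then have "(Y *v axis i 1) $ j = 0" by simp
  then show ?thesis by (simp add: matrix_vector_mult_basis column_def)
qed

lemma psd_sum_outer_decomposition_on:
  fixes Y :: "real^'n^'n"
  assumes "finite R" "psd Y" "\<And>i j. i \<notin> R \<or> j \<notin> R \<Longrightarrow> Y $ i $ j = 0"
  shows "\<exists>(m::nat) w. Y = (\<Sum>k<m. outer (w k) (w k))"
  using assms
proof (induction R arbitrary: Y rule: finite_induct)
  case empty
  then have "Y = 0" by (simp add: vec_eq_iff)
  then show ?case by (intro exI[of _ "0::nat"]) simp
next
  case (insert i R)
  have psd: "psd Y" by fact
  let ?d = "Y $ i $ i"
  let ?c = "Y *v axis i 1"
  have cj: "?c $ j = Y $ j $ i" for j by (simp add: matrix_vector_mult_basis column_def)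
  consider "?d = 0" | "?d > 0" using psd_diagonal_nonneg[OF psd, of i] by linarith
  then show ?case
  proof cases
    case 1
    then have "Y $ j $ i = 0" for j by (rule psd_column_zero_if_diagonal_zero[OF psd])
    then have "Y $ j $ k = 0" if "j \<notin> R \<or> k \<notin> R" for j k
      using insert.prems(2) that psd_entry_commute[OF psd, of j k] by (cases "j = i"; cases "k = i") auto
    then show ?thesis using insert.IH psd by blast
  next
    case 2
    define Y' where "Y' = Y - (1 / ?d) *\<^sub>R outer ?c ?c"
    have Y'jk: "Y' $ j $ k = Y $ j $ k - Y $ j $ i * Y $ k $ i / ?d" for j k
      by (simp add: Y'_def outer_def cj)
    have "Y' $ j $ k = 0" if "j \<notin> R \<or> k \<notin> R" for j k
      using that insert.prems(2)[of j k] insert.prems(2)[of j i] insert.prems(2)[of k i] 2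
        Y'jk[of j k] psd_entry_commute[OF psd, of i k]
      by (cases "j = i"; cases "k = i") auto
    then obtain m :: nat and w where w: "Y' = (\<Sum>k<m. outer (w k) (w k))"
      using insert.IH psd_rank_one_downdate[OF psd 2] unfolding Y'_def by blast
    define w' where "w' = w(m := (1 / sqrt ?d) *\<^sub>R ?c)"
    have "Y = Y' + (1 / ?d) *\<^sub>R outer ?c ?c" by (simp add: Y'_def)
    also have "(1 / ?d) *\<^sub>R outer ?c ?c = outer (w' m) (w' m)"
      using 2 by (simp add: w'_def outer_scaleR_self power_divide)
    also have "Y' = (\<Sum>k<m. outer (w' k) (w' k))" using w by (simp add: w'_def)
    finally have "Y = (\<Sum>k<Suc m. outer (w' k) (w' k))" by simp
    then show ?thesis by blast
  qed
qed

lemma psd_sum_outer_decomposition: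
  fixes Y :: "real^'n^'n"
  assumes "psd Y"
  obtains m :: nat and w where "Y = (\<Sum>k<m. outer (w k) (w k))"
  using psd_sum_outer_decomposition_on[of UNIV Y] assms by auto

lemma psd_range_orthogonal_kernel:
  fixes S :: "real^'n^'n"
  assumes "psd S"
  shows "S *v a \<in> orthogonal_comp {v. S *v v = 0}"
proof -
  have "y \<bullet> (S *v a) = 0" if "S *v y = 0" for y
    using symmetric_matrix_inner_commute[of S y a] assms that by (simp add: psd_def)
  then show ?thesis by (auto simp: orthogonal_comp_def orthogonal_def)
qed

lemma quadratic_form_kernel_residual:
  fixes S :: "real^'n^'n"
  assumes psd: "psd S"
  defines "Q \<equiv> \<lambda>v. v - closest_point {v. S *v v = 0} v"
  shows "S *v Q v = S *v v" and "Q v \<bullet> (S *v Q v) = v \<bullet> (S *v v)"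
proof -
  let ?N = "{v. S *v v = 0}"
  have N: "subspace ?N" by (rule real_vector.linear_subspace_kernel) simp
  have PN: "S *v closest_point ?N v = 0" using closest_point_subspace(1)[OF N] by blast
  then show SQ: "S *v Q v = S *v v" by (simp add: Q_def matrix_vector_mult_diff_distrib)
  have "closest_point ?N v \<bullet> (S *v Q v) = 0"
    using symmetric_matrix_inner_commute[of S "closest_point ?N v" "Q v"] psd PN by (simp add: psd_def)
  then show "Q v \<bullet> (S *v Q v) = v \<bullet> (S *v v)"
    using SQ by (simp add: Q_def inner_diff_left)
qed

lemma quadratic_form_attains_min_on_subspace:
  fixes S :: "real^'n^'n"
  assumes U: "subspace U" "U \<noteq> {0}"
  obtains v0 where "v0 \<in> U" "norm v0 = 1"
    "\<And>u. u \<in> U \<Longrightarrow> (v0 \<bullet> (S *v v0)) * (norm u)\<^sup>2 \<le> u \<bullet> (S *v u)"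
proof -
  let ?C = "U \<inter> sphere 0 1"
  have ne: "?C \<noteq> {}" using unit_vector_in_subspace[OF U] by auto
  have cont: "continuous_on ?C (\<lambda>v. v \<bullet> (S *v v))"
    by (intro continuous_intros linear_continuous_on) (simp add: linear_conv_bounded_linear)
  obtain v0 where v0: "v0 \<in> ?C" and min: "\<forall>y\<in>?C. v0 \<bullet> (S *v v0) \<le> y \<bullet> (S *v y)"
    using continuous_attains_inf[OF closed_Int_compact[OF closed_subspace[OF U(1)] compact_sphere] ne cont] by blast
  have "(v0 \<bullet> (S *v v0)) * (norm u)\<^sup>2 \<le> u \<bullet> (S *v u)" if u: "u \<in> U" for u
  proof (cases "u = 0")
    case False
    have "u /\<^sub>R norm u \<in> ?C" using False u U(1) by (auto simp: subspace_scale)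
    then have "v0 \<bullet> (S *v v0) \<le> (u /\<^sub>R norm u) \<bullet> (S *v (u /\<^sub>R norm u))" using min by blast
    also have "\<dots> = (u \<bullet> (S *v u)) / (norm u)\<^sup>2"
      by (simp add: matrix_vector_mult_scaleR power2_eq_square divide_inverse_commute)
    finally show ?thesis using False by (simp add: field_simps)
  qed simp
  then show ?thesis using that v0 by auto
qed

text \<open>Otherwise moving along \<open>S v\<^sub>0 - \<mu> v\<^sub>0\<close> would decrease the Rayleigh quotient to
  first order.\<close>

lemma rayleigh_minimizer_eigenvector:
  fixes S :: "real^'n^'n"
  assumes psd: "psd S" and U: "subspace U" and range: "\<And>a. S *v a \<in> U"
    and v0: "v0 \<in> U" "norm v0 = 1"
    and min: "\<And>u. u \<in> U \<Longrightarrow> (v0 \<bullet> (S *v v0)) * (norm u)\<^sup>2 \<le> u \<bullet> (S *v u)"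
  shows "S *v v0 = (v0 \<bullet> (S *v v0)) *\<^sub>R v0"
proof -
  have sym: "transpose S = S" using psd by (simp add: psd_def)
  define \<mu> where "\<mu> = v0 \<bullet> (S *v v0)"
  define h where "h = S *v v0 - \<mu> *\<^sub>R v0"
  have hU: "h \<in> U" unfolding h_def using range v0 U by (auto intro: subspace_diff subspace_scale)
  have "0 \<le> (2 * (h \<bullet> h)) * t + (h \<bullet> (S *v h) - \<mu> * (h \<bullet> h)) * t\<^sup>2" for t
  proof -
    have "v0 + t *\<^sub>R h \<in> U" using v0 hU U by (auto intro: subspace_add subspace_scale)
    then have "\<mu> * (norm (v0 + t *\<^sub>R h))\<^sup>2 \<le> (v0 + t *\<^sub>R h) \<bullet> (S *v (v0 + t *\<^sub>R h))"
      unfolding \<mu>_def by (rule min)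
    moreover have "(norm (v0 + t *\<^sub>R h))\<^sup>2 = 1 + 2 * t * (h \<bullet> v0) + t\<^sup>2 * (h \<bullet> h)"
      using v0(2) unfolding power2_norm_eq_inner
      by (simp add: inner_add_left inner_add_right inner_commute power2_eq_square algebra_simps norm_eq_1)
    moreover have "h \<bullet> (S *v v0) = h \<bullet> h + \<mu> * (h \<bullet> v0)"
      by (simp add: h_def inner_diff_right inner_diff_left inner_commute algebra_simps)
    ultimately show ?thesis
      using quadratic_form_add_scaleR[OF sym, of v0 t h] by (simp add: \<mu>_def algebra_simps)
  qed
  then have "2 * (h \<bullet> h) = 0" by (rule quadratic_nonneg_imp_linear_coeff_zero)
  then show ?thesis by (simp add: h_def \<mu>_def)
qed

text \<open>Eigenvectors for nonzero eigenvalues lie in the range of \<open>S\<close>, which is orthogonal to the kernel.\<close>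

lemma min_nonzero_eig_eqI:
  fixes S :: "real^'n^'n"
  assumes psd: "psd S" and eig: "S *v v0 = \<mu> *\<^sub>R v0" "v0 \<noteq> 0" "\<mu> \<noteq> 0"
    and min: "\<And>u. u \<in> orthogonal_comp {v. S *v v = 0} \<Longrightarrow> \<mu> * (norm u)\<^sup>2 \<le> u \<bullet> (S *v u)"
  shows "min_nonzero_eig S = \<mu>"
  unfolding min_nonzero_eig_def
proof (rule cInf_eq_minimum)
  show "\<mu> \<in> {l. l \<noteq> 0 \<and> (\<exists>v. v \<noteq> 0 \<and> S *v v = l *\<^sub>R v)}" using eig by blast
  fix l assume "l \<in> {l. l \<noteq> 0 \<and> (\<exists>v. v \<noteq> 0 \<and> S *v v = l *\<^sub>R v)}"
  then obtain u where l: "l \<noteq> 0" "u \<noteq> 0" "S *v u = l *\<^sub>R u" by blast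
  have "u = (1 / l) *\<^sub>R (S *v u)" using l by simp
  then have "u \<in> orthogonal_comp {v. S *v v = 0}"
    using psd_range_orthogonal_kernel[OF psd, of u] subspace_orthogonal_comp by (metis subspace_scale)
  then have "\<mu> * (norm u)\<^sup>2 \<le> u \<bullet> (S *v u)" by (rule min)
  also have "\<dots> = l * (u \<bullet> u)" using l(3) by simp
  also have "\<dots> = l * (norm u)\<^sup>2" by (simp only: power2_norm_eq_inner)
  finally show "\<mu> \<le> l" using l by simp
qed

lemma psd_min_nonzero_eig:
  fixes S :: "real^'n^'n"
  assumes psd: "psd S" and S: "S \<noteq> 0"
  shows "min_nonzero_eig S > 0"
    and "min_nonzero_eig S * (norm (v - closest_point {v. S *v v = 0} v))\<^sup>2 \<le> v \<bullet> (S *v v)"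
proof -
  let ?N = "{v. S *v v = 0}"
  let ?U = "orthogonal_comp ?N"
  let ?Q = "\<lambda>v. v - closest_point ?N v"
  have N: "subspace ?N" by (rule real_vector.linear_subspace_kernel) simp
  have U: "subspace ?U" by (rule subspace_orthogonal_comp)
  have QU: "?Q v \<in> ?U" for v
    using closest_point_subspace(2)[OF N] by (auto simp: orthogonal_comp_def orthogonal_def inner_commute)
  obtain a where "S *v a \<noteq> 0" using S matrix_eq[of S 0] by auto
  then have "?U \<noteq> {0}" using QU[of a] quadratic_form_kernel_residual(1)[OF psd, of a] by force
  then obtain v0 where v0: "v0 \<in> ?U" "norm v0 = 1"
    and min: "\<And>u. u \<in> ?U \<Longrightarrow> (v0 \<bullet> (S *v v0)) * (norm u)\<^sup>2 \<le> u \<bullet> (S *v u)"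
    using quadratic_form_attains_min_on_subspace[OF U] by blast
  define \<mu> where "\<mu> = v0 \<bullet> (S *v v0)"
  have eig: "S *v v0 = \<mu> *\<^sub>R v0"
    unfolding \<mu>_def using rayleigh_minimizer_eigenvector[OF psd U psd_range_orthogonal_kernel[OF psd] v0 min] .
  have "\<mu> \<noteq> 0"
  proof
    assume "\<mu> = 0"
    then have "v0 \<in> ?N" using eig by simp
    then show False using v0 by (auto simp: orthogonal_comp_def orthogonal_def)
  qed
  then have pos: "\<mu> > 0" using psd by (simp add: psd_def \<mu>_def order_le_neq_trans)
  have "v0 \<noteq> 0" using v0(2) by auto
  then have "min_nonzero_eig S = \<mu>"
    using min_nonzero_eig_eqI[OF psd eig _ \<open>\<mu> \<noteq> 0\<close>] min unfolding \<mu>_def by blast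
  then show "min_nonzero_eig S > 0" using pos by simp
  show "min_nonzero_eig S * (norm (?Q v))\<^sup>2 \<le> v \<bullet> (S *v v)"
    using min[OF QU[of v]] quadratic_form_kernel_residual(2)[OF psd, of v] \<open>min_nonzero_eig S = \<mu>\<close>
    by (simp add: \<mu>_def)
qed

lemma norm_sum_scaleR_sq:
  fixes w :: "nat \<Rightarrow> 'a::real_inner"
  shows "(norm (\<Sum>k<m. c k *\<^sub>R w k))\<^sup>2 = (\<Sum>k<m. \<Sum>j<m. c k * c j * (w k \<bullet> w j))"
  unfolding power2_norm_eq_inner inner_sum_left by (simp add: inner_sum_right mult_ac)

lemma norm_vec_sq_eq_sum: "(norm (x :: real^'n))\<^sup>2 = (\<Sum>i\<in>UNIV. (x $ i)\<^sup>2)"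
  unfolding power2_norm_eq_inner by (simp add: inner_vec_def power2_eq_square)

lemma norm_sum_outer_minus_projection_sq:
  fixes w :: "nat \<Rightarrow> real^'n"
  assumes N: "subspace N"
  defines "P \<equiv> closest_point N"
  shows "(norm ((\<Sum>k<m. outer (w k) (w k)) - (\<Sum>k<m. outer (P (w k)) (P (w k)))))\<^sup>2
           \<le> 2 * (\<Sum>k<m. \<Sum>j<m. (w k \<bullet> w j) * ((w k - P (w k)) \<bullet> (w j - P (w j))))"
proof -
  note split = inner_closest_point_subspace_split[OF N, folded P_def]
  let ?Y = "\<Sum>k<m. outer (w k) (w k)" and ?Z = "\<Sum>k<m. outer (P (w k)) (P (w k))"
  have "?Y \<bullet> ?Z = ?Z \<bullet> ?Z"
    unfolding inner_sum_outer_sum_outer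
  proof (intro sum.cong refl)
    fix k j
    show "(w k \<bullet> P (w j))\<^sup>2 = (P (w k) \<bullet> P (w j))\<^sup>2" using split(1)[of "w k" "w j"] by simp
  qed
  then have "(norm (?Y - ?Z))\<^sup>2 = ?Y \<bullet> ?Y - ?Z \<bullet> ?Z"
    by (simp add: power2_norm_eq_inner inner_diff_left inner_diff_right inner_commute)
  also have "\<dots> = (\<Sum>k<m. \<Sum>j<m. (w k \<bullet> w j)\<^sup>2 - (P (w k) \<bullet> P (w j))\<^sup>2)"
    unfolding inner_sum_outer_sum_outer by (simp add: sum_subtractf)
  also have "\<dots> \<le> (\<Sum>k<m. \<Sum>j<m. 2 * ((w k \<bullet> w j) * ((w k - P (w k)) \<bullet> (w j - P (w j)))))"
  proof (intro sum_mono)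
    have "a\<^sup>2 - b\<^sup>2 \<le> 2 * (a * r)" if "a = b + r" for a b r :: real
      using that by (simp add: power2_eq_square algebra_simps)
    then show "(w k \<bullet> w j)\<^sup>2 - (P (w k) \<bullet> P (w j))\<^sup>2 \<le> 2 * ((w k \<bullet> w j) * ((w k - P (w k)) \<bullet> (w j - P (w j))))"
      for k j using split(2) by blast
  qed
  finally show ?thesis by (simp add: sum_distrib_left)
qed

text \<open>The double sum is \<open>\<Sum>\<^sub>i |Y u\<^sub>i|\<^sup>2\<close> with \<open>u\<^sub>i\<close> the residual of the \<open>i\<close>-th unit vector.\<close>

lemma sum_outer_residual_cross_le:
  fixes w :: "nat \<Rightarrow> real^'n"
  assumes N: "subspace N" and Y: "Y = (\<Sum>k<m. outer (w k) (w k))"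
    and lam: "\<And>u. (norm (Y *v u))\<^sup>2 \<le> lam * (u \<bullet> (Y *v u))"
  defines "Q \<equiv> \<lambda>v. v - closest_point N v"
  shows "(\<Sum>k<m. \<Sum>j<m. (w k \<bullet> w j) * (Q (w k) \<bullet> Q (w j))) \<le> lam * (\<Sum>k<m. (norm (Q (w k)))\<^sup>2)"
proof -
  define u where "u i = Q (axis i 1)" for i :: 'n
  have Qi: "Q v $ i = v \<bullet> u i" for v i
  proof -
    have "Q v $ i = Q v \<bullet> axis i 1" by (simp add: inner_axis)
    then show ?thesis using inner_closest_point_subspace_split(3)[OF N, of v "axis i 1"]
      by (simp add: u_def Q_def)
  qed
  have Yu: "Y *v x = (\<Sum>k<m. (w k \<bullet> x) *\<^sub>R w k)" for x by (simp add: Y sum_outer_mult_vec)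
  have "(\<Sum>k<m. \<Sum>j<m. (w k \<bullet> w j) * (Q (w k) \<bullet> Q (w j)))
        = (\<Sum>k<m. \<Sum>j<m. \<Sum>i\<in>UNIV. (w k \<bullet> u i) * (w j \<bullet> u i) * (w k \<bullet> w j))"
    by (simp add: inner_vec_def Qi sum_distrib_left mult_ac)
  also have "\<dots> = (\<Sum>k<m. \<Sum>i\<in>UNIV. \<Sum>j<m. (w k \<bullet> u i) * (w j \<bullet> u i) * (w k \<bullet> w j))"
    by (rule sum.cong[OF refl]) (rule sum.swap)
  also have "\<dots> = (\<Sum>i\<in>UNIV. \<Sum>k<m. \<Sum>j<m. (w k \<bullet> u i) * (w j \<bullet> u i) * (w k \<bullet> w j))"
    by (rule sum.swap)
  also have "\<dots> = (\<Sum>i\<in>UNIV. (norm (Y *v u i))\<^sup>2)"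
    by (simp add: Yu norm_sum_scaleR_sq)
  also have "\<dots> \<le> (\<Sum>i\<in>UNIV. lam * (u i \<bullet> (Y *v u i)))" by (intro sum_mono lam)
  also have "\<dots> = lam * (\<Sum>i\<in>UNIV. \<Sum>k<m. (w k \<bullet> u i)\<^sup>2)"
    by (simp add: Yu inner_sum_right sum_distrib_left power2_eq_square inner_commute)
  also have "\<dots> = lam * (\<Sum>k<m. \<Sum>i\<in>UNIV. (w k \<bullet> u i)\<^sup>2)" by (simp only: sum.swap[of _ UNIV])
  also have "\<dots> = lam * (\<Sum>k<m. (norm (Q (w k)))\<^sup>2)"
    by (simp add: norm_vec_sq_eq_sum Qi)
  finally show ?thesis .
qed

lemma psd_face_approximation:
  fixes S Y :: "real^'n^'n" and w :: "nat \<Rightarrow> real^'n"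
  assumes S: "psd S" "S \<noteq> 0" and Y: "Y = (\<Sum>k<m. outer (w k) (w k))"
    and lam: "\<And>u. (norm (Y *v u))\<^sup>2 \<le> lam * (u \<bullet> (Y *v u))" "0 \<le> lam"
  shows "\<exists>Z. psd Z \<and> S \<bullet> Z = 0 \<and> norm (Y - Z) \<le> sqrt (2 * ((S \<bullet> Y) / min_nonzero_eig S) * lam)"
proof -
  let ?N = "{v. S *v v = 0}"
  let ?P = "closest_point ?N"
  let ?Q = "\<lambda>v. v - ?P v"
  let ?\<mu> = "min_nonzero_eig S"
  have N: "subspace ?N" by (rule real_vector.linear_subspace_kernel) simp
  define Z where "Z = (\<Sum>k<m. outer (?P (w k)) (?P (w k)))"
  have "S \<bullet> Z = 0"
    unfolding Z_def using closest_point_subspace(1)[OF N] by (simp add: inner_sum_right inner_outer)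
  define q where "q = (\<Sum>k<m. (norm (?Q (w k)))\<^sup>2)"
  have "?\<mu> * q = (\<Sum>k<m. ?\<mu> * (norm (?Q (w k)))\<^sup>2)" by (simp add: q_def sum_distrib_left)
  also have "\<dots> \<le> (\<Sum>k<m. w k \<bullet> (S *v w k))" by (intro sum_mono psd_min_nonzero_eig(2)[OF S])
  also have "\<dots> = S \<bullet> Y" by (simp add: Y inner_sum_right inner_outer)
  finally have q: "q \<le> (S \<bullet> Y) / ?\<mu>" using psd_min_nonzero_eig(1)[OF S] by (simp add: field_simps)
  have "(norm (Y - Z))\<^sup>2 \<le> 2 * (\<Sum>k<m. \<Sum>j<m. (w k \<bullet> w j) * (?Q (w k) \<bullet> ?Q (w j)))"
    using norm_sum_outer_minus_projection_sq[OF N, of w m] unfolding Y Z_def .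
  also have "\<dots> \<le> 2 * (lam * q)" using sum_outer_residual_cross_le[OF N Y lam(1)] by (simp add: q_def)
  also have "\<dots> \<le> 2 * (lam * ((S \<bullet> Y) / ?\<mu>))" using mult_left_mono[OF q lam(2)] by simp
  also have "\<dots> = 2 * ((S \<bullet> Y) / ?\<mu>) * lam" by (simp only: mult_ac)
  finally have "norm (Y - Z) \<le> sqrt (2 * ((S \<bullet> Y) / ?\<mu>) * lam)" by (simp add: real_le_rsqrt)
  moreover have "psd Z" unfolding Z_def by (rule psd_sum_outer)
  ultimately show ?thesis using \<open>S \<bullet> Z = 0\<close> by blast
qed

lemma psd_norm_mult_sq_le:
  fixes Y :: "real^'n^'n"
  assumes psd: "psd Y" and bound: "\<And>v. norm (Y *v v) \<le> lam * norm v"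
  shows "(norm (Y *v u))\<^sup>2 \<le> lam * (u \<bullet> (Y *v u))"
proof -
  let ?a = "Y *v u"
  have "?a \<bullet> (Y *v ?a) \<le> norm ?a * norm (Y *v ?a)" by (rule norm_cauchy_schwarz)
  also have "\<dots> \<le> norm ?a * (lam * norm ?a)" using bound by (simp add: mult_left_mono)
  finally have aYa: "?a \<bullet> (Y *v ?a) \<le> lam * (norm ?a)\<^sup>2" by (simp add: power2_eq_square mult_ac)
  have uYu: "0 \<le> u \<bullet> (Y *v u)" using psd by (simp add: psd_def)
  have "((norm ?a)\<^sup>2)\<^sup>2 = (?a \<bullet> (Y *v u))\<^sup>2" by (simp add: power2_norm_eq_inner)
  also have "\<dots> \<le> (?a \<bullet> (Y *v ?a)) * (u \<bullet> (Y *v u))" by (rule psd_cauchy_schwarz[OF psd])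
  also have "\<dots> \<le> lam * (norm ?a)\<^sup>2 * (u \<bullet> (Y *v u))" using aYa uYu by (rule mult_right_mono)
  finally have "(norm ?a)\<^sup>2 * (norm ?a)\<^sup>2 \<le> (norm ?a)\<^sup>2 * (lam * (u \<bullet> (Y *v u)))"
    by (simp add: power2_eq_square mult_ac)
  then show ?thesis
    by (cases "norm ?a = 0") (auto simp: mult_le_cancel_left power2_eq_square mult_ac uYu)
qed

text \<open>\<open>Y\<close> and \<open>X\<close> agree on the span of the \<open>w k\<close>, and \<open>Y\<close> vanishes on its orthogonal complement.\<close>

lemma norm_sum_outer_mult_le_onorm:
  fixes X G :: "real^'n^'n" and w :: "nat \<Rightarrow> real^'n"
  assumes X: "X = (\<Sum>k<m. outer (w k) (w k)) + G" and G: "\<And>k. k < m \<Longrightarrow> G *v w k = 0"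
  shows "norm ((\<Sum>k<m. outer (w k) (w k)) *v v) \<le> onorm (\<lambda>v. X *v v) * norm v"
proof -
  let ?Y = "\<Sum>k<m. outer (w k) (w k)"
  define U where "U = span (w ` {..<m})"
  have U: "subspace U" by (simp add: U_def)
  define v1 where "v1 = closest_point U v"
  have v1: "v1 \<in> U" "\<And>u. u \<in> U \<Longrightarrow> (v - v1) \<bullet> u = 0"
    using closest_point_subspace[OF U] by (auto simp: v1_def)
  have "?Y *v (v - v1) = (\<Sum>k<m. (w k \<bullet> (v - v1)) *\<^sub>R w k)" by (simp add: sum_outer_mult_vec)
  also have "\<dots> = 0"
  proof (intro sum.neutral ballI)
    fix k assume "k \<in> {..<m}"
    then have "w k \<in> U" unfolding U_def by (intro span_base imageI)
    then show "(w k \<bullet> (v - v1)) *\<^sub>R w k = 0" using v1(2) by (simp add: inner_commute)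
  qed
  finally have Yv: "?Y *v v = ?Y *v v1" by (simp add: matrix_vector_mult_diff_distrib)
  have "subspace {u. G *v u = 0}" by (rule real_vector.linear_subspace_kernel) simp
  then have "U \<subseteq> {u. G *v u = 0}" unfolding U_def using G by (intro span_minimal) auto
  then have "G *v v1 = 0" using v1(1) by blast
  then have "?Y *v v = X *v v1" using Yv by (simp add: X matrix_vector_mult_add_rdistrib)
  also have "norm (X *v v1) \<le> onorm (\<lambda>v. X *v v) * norm v1"
    by (rule onorm) (simp add: linear_conv_bounded_linear)
  also have "\<dots> \<le> onorm (\<lambda>v. X *v v) * norm v"
  proof (rule mult_left_mono)
    show "norm v1 \<le> norm v" unfolding v1_def by (rule norm_closest_point_subspace_le[OF U])
    show "0 \<le> onorm (\<lambda>v. X *v v)" by (rule onorm_pos_le) (simp add: linear_conv_bounded_linear)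
  qed
  finally show ?thesis .
qed

lemma psd_mult_eq_zero_if_orthogonal:
  fixes H :: "real^'n^'n" and w :: "nat \<Rightarrow> real^'n"
  assumes psd: "psd H" and HY: "H \<bullet> (\<Sum>k<m. outer (w k) (w k)) = 0" and k: "k < m"
  shows "H *v w k = 0"
proof -
  have sum0: "(\<Sum>k<m. w k \<bullet> (H *v w k)) = 0" using HY by (simp add: inner_sum_right inner_outer)
  have nonneg: "\<And>k. k \<in> {..<m} \<Longrightarrow> 0 \<le> w k \<bullet> (H *v w k)" using psd by (simp add: psd_def)
  have "\<forall>k\<in>{..<m}. w k \<bullet> (H *v w k) = 0"
    using sum0 sum_nonneg_eq_0_iff[of "{..<m}" "\<lambda>k. w k \<bullet> (H *v w k)"] nonneg by simp
  then have "w k \<bullet> (H *v w k) = 0" using k by simp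
  then show ?thesis by (rule psd_null_vector[OF psd])
qed

section \<open>The nonnegative orthant and the second-order cone\<close>

lemma orthant_face_approximation:
  fixes \<sigma> y :: "real^'n"
  assumes \<sigma>: "\<And>i. 0 \<le> \<sigma> $ i" "\<sigma> \<noteq> 0" and y: "\<And>i. 0 \<le> y $ i"
  shows "\<exists>z. (\<forall>i. 0 \<le> z $ i) \<and> \<sigma> \<bullet> z = 0
           \<and> norm (y - z) \<le> (\<sigma> \<bullet> y) / Inf {\<sigma> $ i | i. \<sigma> $ i \<noteq> 0}"
proof -
  define M where "M = {\<sigma> $ i | i. \<sigma> $ i \<noteq> 0}"
  have M: "finite M" "M \<noteq> {}"
    using \<sigma>(2) by (auto simp: M_def vec_eq_iff intro: finite_image_set)
  have "Inf M \<in> M" using cInf_eq_Min[OF M] Min_in[OF M] by simp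
  then obtain i where "Inf M = \<sigma> $ i" "\<sigma> $ i \<noteq> 0" by (auto simp: M_def)
  then have pos: "Inf M > 0" using \<sigma>(1)[of i] by simp
  have le: "Inf M \<le> \<sigma> $ i" if "\<sigma> $ i \<noteq> 0" for i
    using that M(1) by (intro cInf_lower) (auto simp: M_def)
  define z where "z = (\<chi> i. if \<sigma> $ i = 0 then y $ i else 0)"
  have "\<sigma> \<bullet> z = 0" unfolding inner_vec_def z_def by (intro sum.neutral) auto
  moreover have "norm (y - z) \<le> (\<Sum>i\<in>UNIV. \<bar>(y - z) $ i\<bar>)" by (rule norm_le_l1_cart)
  moreover have "(\<Sum>i\<in>UNIV. \<bar>(y - z) $ i\<bar>) \<le> (\<Sum>i\<in>UNIV. y $ i * \<sigma> $ i / Inf M)"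
  proof (rule sum_mono)
    fix i
    show "\<bar>(y - z) $ i\<bar> \<le> y $ i * \<sigma> $ i / Inf M"
    proof (cases "\<sigma> $ i = 0")
      case False
      have "y $ i * Inf M \<le> y $ i * \<sigma> $ i" using le[OF False] y[of i] by (simp add: mult_left_mono)
      then show ?thesis using False y[of i] pos by (simp add: z_def field_simps)
    qed (simp add: z_def)
  qed
  moreover have "(\<Sum>i\<in>UNIV. y $ i * \<sigma> $ i / Inf M) = (\<sigma> \<bullet> y) / Inf M"
    by (simp add: inner_vec_def sum_divide_distrib mult.commute)
  ultimately show ?thesis using y by (intro exI[of _ z]) (auto simp: M_def z_def)
qed

lemma soc_inner_nonneg:
  fixes a u :: "real^'n"
  assumes "norm a \<le> \<alpha>" "norm u \<le> \<tau>"
  shows "0 \<le> a \<bullet> u + \<alpha> * \<tau>"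
proof -
  have "norm a * norm u \<le> \<alpha> * \<tau>" using assms by (simp add: mult_mono')
  then show ?thesis using Cauchy_Schwarz_ineq2[of a u] by linarith
qed

lemma soc_interior_ball:
  fixes a :: "real^'n"
  assumes "norm a < \<alpha>"
  shows "ball (a, \<alpha>) ((\<alpha> - norm a) / 2) \<subseteq> {(u, t). norm u \<le> t}"
proof
  fix p assume p: "p \<in> ball (a, \<alpha>) ((\<alpha> - norm a) / 2)"
  define r where "r = (\<alpha> - norm a) / 2"
  obtain u t where ut: "p = (u, t)" by fastforce
  have d: "norm (a - u, \<alpha> - t) < r" using p by (simp add: ut r_def dist_norm)
  have "norm (a - u) < r" "\<bar>\<alpha> - t\<bar> < r"
    using d norm_fst_le[of "a - u" "\<alpha> - t"] norm_snd_le[of "\<alpha> - t" "a - u"] by auto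
  moreover have "norm u \<le> norm a + norm (a - u)"
    using norm_triangle_ineq2[of u a] norm_minus_commute[of a u] by simp
  moreover have "\<alpha> = norm a + 2 * r" by (simp add: r_def field_simps)
  ultimately have "norm u \<le> t" using abs_ge_self[of "\<alpha> - t"] by linarith
  then show "p \<in> {(u, t). norm u \<le> t}" by (simp add: ut)
qed

text \<open>On the boundary ray \<open>(a, |a|)\<close> of the self-dual second-order cone, the complementary face is
  the opposite ray \<open>{(- l a, l |a|) | l \<ge> 0}\<close>; project \<open>(u, \<tau>)\<close> onto it.\<close>

lemma soc_face_approximation:
  fixes a u :: "real^'n"
  assumes \<alpha>: "\<alpha> = norm a" "\<alpha> > 0" and y: "norm u \<le> \<tau>"
  shows "\<exists>z\<in>{(u, t). norm u \<le> t}. (a, \<alpha>) \<bullet> z = 0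
           \<and> (norm ((u, \<tau>) - z))\<^sup>2 \<le> 2 * \<tau> * (\<tau> + (a \<bullet> u) / \<alpha>)"
proof -
  define P where "P = a \<bullet> u"
  define D where "D = \<alpha> * \<tau> - P"
  define l where "l = D / (2 * \<alpha>\<^sup>2)"
  have aa: "a \<bullet> a = \<alpha>\<^sup>2" using \<alpha>(1) by (simp add: power2_norm_eq_inner)
  have lD: "2 * l * \<alpha>\<^sup>2 = D" using \<alpha>(2) by (simp add: l_def)
  have "P \<le> norm a * norm u" unfolding P_def by (rule norm_cauchy_schwarz)
  also have "\<dots> \<le> \<alpha> * \<tau>" using \<alpha> y by (simp add: mult_left_mono)
  finally have l: "l \<ge> 0" using \<alpha>(2) by (simp add: l_def D_def)
  define z where "z = (- (l *\<^sub>R a), l * \<alpha>)"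
  have zK: "z \<in> {(u, t). norm u \<le> t}" using l \<alpha>(1) by (simp add: z_def)
  have "(a, \<alpha>) \<bullet> z = 0" using aa by (simp add: z_def power2_eq_square)
  have "(norm (u + l *\<^sub>R a))\<^sup>2 = (u + l *\<^sub>R a) \<bullet> (u + l *\<^sub>R a)" by (rule power2_norm_eq_inner)
  also have "\<dots> = u \<bullet> u + 2 * l * (a \<bullet> u) + l\<^sup>2 * (a \<bullet> a)"
    by (simp add: inner_add_left inner_add_right inner_commute power2_eq_square algebra_simps)
  finally have ula: "(norm (u + l *\<^sub>R a))\<^sup>2 = (norm u)\<^sup>2 + 2 * l * P + l\<^sup>2 * \<alpha>\<^sup>2"
    by (simp add: aa P_def power2_norm_eq_inner)
  have "(norm ((u, \<tau>) - z))\<^sup>2 = (norm (u + l *\<^sub>R a))\<^sup>2 + (\<tau> - l * \<alpha>)\<^sup>2"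
    by (simp add: z_def norm_Pair)
  also have "\<dots> = (norm u)\<^sup>2 + \<tau>\<^sup>2 - 2 * l * D + l * (2 * l * \<alpha>\<^sup>2)"
    unfolding ula by (simp add: D_def power2_eq_square algebra_simps)
  also have "\<dots> = (norm u)\<^sup>2 + \<tau>\<^sup>2 - l * D" unfolding lD by simp
  also have "\<dots> \<le> 2 * \<tau>\<^sup>2 - l * D" using y by (simp add: power_mono)
  also have "\<dots> \<le> 2 * \<tau> * (\<tau> + P / \<alpha>)"
  proof -
    have "l * D + 2 * \<tau> * (P / \<alpha>) = (\<alpha> * \<tau> + P)\<^sup>2 / (2 * \<alpha>\<^sup>2)"
      using \<alpha>(2) by (simp add: l_def D_def power2_eq_square field_simps)
    moreover have "0 \<le> (\<alpha> * \<tau> + P)\<^sup>2 / (2 * \<alpha>\<^sup>2)" by simp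
    moreover have "2 * \<tau> * (\<tau> + P / \<alpha>) = 2 * \<tau>\<^sup>2 + 2 * \<tau> * (P / \<alpha>)"
      by (simp add: algebra_simps power2_eq_square)
    ultimately show ?thesis by linarith
  qed
  finally show ?thesis using zK \<open>(a, \<alpha>) \<bullet> z = 0\<close> unfolding P_def by blast
qed

lemma soc_frontier_dual_point:
  fixes T :: "'e::euclidean_space \<Rightarrow> (real^'n) \<times> real"
  assumes T: "isometric_onto T UNIV" and K: "K = T -` {(u, t). norm u \<le> t}"
    and s: "s \<in> frontier (dual_cone K)" "s \<in> dual_cone K" "s \<noteq> 0"
  obtains a where "T s = (a, norm a)" "norm a > 0"
proof -
  obtain a \<alpha> where Ts: "T s = (a, \<alpha>)" by fastforce
  have dual: "0 \<le> a \<bullet> u + \<alpha> * t" if "norm u \<le> t" for u t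
    using dual_cone_via_isometry[OF T K s(2), of "(u, t)"] that Ts by simp
  have "0 \<le> \<alpha>" using dual[of 0 1] by simp
  moreover have "0 \<le> norm a * (\<alpha> - norm a)"
    using dual[of "- a" "norm a"] by (simp add: power2_norm_eq_inner[symmetric] power2_eq_square algebra_simps)
  ultimately have "norm a \<le> \<alpha>" by (cases "norm a = 0") (auto simp: zero_le_mult_iff)
  moreover have "\<not> norm a < \<alpha>"
  proof
    assume "norm a < \<alpha>"
    then have "ball (T s) ((\<alpha> - norm a) / 2) \<subseteq> {(u, t). norm u \<le> t}" "(\<alpha> - norm a) / 2 > 0"
      using soc_interior_ball[of a \<alpha>] Ts by auto
    moreover have "0 \<le> d \<bullet> z" if "d \<in> {(u, t). norm u \<le> t}" "z \<in> {(u, t). norm u \<le> t}"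
      for d z :: "(real^'n) \<times> real"
      using that soc_inner_nonneg by (cases d; cases z) auto
    ultimately have "s \<in> interior (dual_cone K)"
      using interior_dual_cone_via_isometry[OF T K] by blast
    then show False using s(1) by (simp add: frontier_def)
  qed
  ultimately have \<alpha>: "\<alpha> = norm a" by simp
  have "T s \<noteq> 0" using s(3) isometric_ontoD(4)[OF T, of s] by auto
  then have "norm a > 0" using Ts \<alpha> by (auto simp: zero_prod_def)
  then show ?thesis using that Ts \<alpha> by blast
qed

section \<open>Error bounds from the distance to the complementary face\<close>

locale strictly_complementary_pair =
  fixes K :: "'e::euclidean_space set" and A :: "'e \<Rightarrow> 'f::euclidean_space"
    and b :: 'f and c :: 'e and xs :: 'e and ys :: 'f and s :: 'e
  assumes proper: "proper_cone K"
    and lin: "linear A"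
    and xs_sol: "xs \<in> primal_solutions A b c K"
    and ys_sol: "ys \<in> dual_solutions A b c K"
    and compact_sol: "compact (primal_solutions A b c K)"
    and s_def: "s = c - adjoint A ys"
    and compl: "s \<bullet> xs = 0"
    and strict_compl: "xs \<in> rel_interior (compl_face K s)"
begin

abbreviation "Fs \<equiv> compl_face K s"
abbreviation "Vs \<equiv> compl_space K s"
abbreviation "Xopt \<equiv> primal_solutions A b c K"

lemma cone_K: "cone K" and convex_K: "convex K" and closed_K: "closed K" and K_ne: "K \<noteq> {}"
  using proper by (auto simp: proper_cone_def dest: interior_subset[THEN subsetD])

lemma pos_part_in_K: "pos_part K x \<in> K"
  unfolding pos_part_def using closed_K K_ne by (rule closest_point_in_set)

lemma pos_part_residual:
  shows "(x - pos_part K x) \<bullet> pos_part K x = 0"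
    and "\<And>k. k \<in> K \<Longrightarrow> (x - pos_part K x) \<bullet> k \<le> 0"
    and "norm (pos_part K x) \<le> norm x"
  unfolding pos_part_def using closest_point_cone[OF closed_K convex_K cone_K K_ne] by auto

lemma inner_s_nonneg: "x \<in> K \<Longrightarrow> 0 \<le> s \<bullet> x"
  using ys_sol s_def by (simp add: dual_solutions_def dual_feasible_def dual_cone_def)

lemma s_in_dual_cone: "s \<in> dual_cone K"
  using inner_s_nonneg by (simp add: dual_cone_def)

lemma objective_eq: "c \<bullet> x = s \<bullet> x + ys \<bullet> A x"
proof -
  have "adjoint A ys \<bullet> x = ys \<bullet> A x" using adjoint_works[OF lin, of x ys] by (simp add: inner_commute)
  then show ?thesis by (simp add: s_def inner_diff_left)
qed

lemma xs_in_K: "xs \<in> K" and A_xs: "A xs = b"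
  using xs_sol by (auto simp: primal_solutions_def primal_feasible_def)

lemma Xopt_eq: "Xopt = {x \<in> Fs. A x = b}"
proof
  show "Xopt \<subseteq> {x \<in> Fs. A x = b}"
  proof
    fix x assume "x \<in> Xopt"
    then have "x \<in> K" "A x = b" "c \<bullet> x \<le> c \<bullet> xs"
      using xs_sol by (auto simp: primal_solutions_def primal_feasible_def)
    then show "x \<in> {x \<in> Fs. A x = b}"
      using objective_eq[of x] objective_eq[of xs] compl A_xs inner_s_nonneg[of x]
      by (auto simp: compl_face_def inner_commute)
  qed
  show "{x \<in> Fs. A x = b} \<subseteq> Xopt"
    using objective_eq inner_s_nonneg
    by (auto simp: primal_solutions_def primal_feasible_def compl_face_def inner_commute)
qed

lemma primal_value_eq: "primal_value A b c K = ys \<bullet> b"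
proof -
  have "Inf ((\<lambda>x. c \<bullet> x) ` primal_feasible A b K) = c \<bullet> xs"
    using xs_sol by (intro cInf_eq_minimum) (auto simp: primal_solutions_def)
  then show ?thesis using objective_eq[of xs] compl A_xs by (simp add: primal_value_def)
qed

lemma gap_identity:
  "s \<bullet> pos_part K x = (c \<bullet> x - primal_value A b c K) + ys \<bullet> (b - A x) - s \<bullet> neg_part K x"
  using objective_eq[of x] by (simp add: primal_value_eq pos_part_def neg_part_def inner_diff_right)

lemma closed_Fs: "closed Fs" and convex_Fs: "convex Fs" and cone_Fs: "cone Fs"
  and xs_in_Fs: "xs \<in> Fs"
proof -
  have Fs: "Fs = K \<inter> {x. s \<bullet> x = 0}" by (auto simp: compl_face_def inner_commute)
  show "closed Fs" unfolding Fs using closed_K by (intro closed_Int closed_hyperplane)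
  show "convex Fs" unfolding Fs using convex_K by (intro convex_Int convex_hyperplane)
  show "cone Fs" using cone_K by (auto simp: cone_def compl_face_def)
  show "xs \<in> Fs" using xs_in_K compl by (simp add: compl_face_def inner_commute)
qed

lemma zero_in_Fs: "0 \<in> Fs"
  using cone_Fs xs_in_Fs by (metis cone_contains_0 empty_iff)

lemma Vs_eq_span: "Vs = span Fs"
  unfolding compl_space_def using zero_in_Fs hull_subset[of Fs affine] by (intro affine_hull_span_0) auto

lemma subspace_Vs: "subspace Vs" and Fs_subset_Vs: "Fs \<subseteq> Vs"
  by (auto simp: Vs_eq_span span_base)

lemma Fs_contains_relative_ball:
  obtains e where "e > 0" "\<And>z. z \<in> Vs \<Longrightarrow> norm (z - xs) < e \<Longrightarrow> z \<in> Fs"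
proof -
  obtain e where "e > 0" "ball xs e \<inter> affine hull Fs \<subseteq> Fs"
    using strict_compl by (auto simp: mem_rel_interior_ball)
  then show ?thesis by (intro that[of e]) (auto simp: compl_space_def dist_norm norm_minus_commute)
qed

text \<open>Compactness of the solution set rules out a recession direction of the face inside the
  kernel of \<open>A\<close>.\<close>

lemma Fs_inter_kernel: "p \<in> Fs \<Longrightarrow> A p = 0 \<Longrightarrow> p = 0"
proof (rule ccontr)
  assume p: "p \<in> Fs" "A p = 0" "p \<noteq> 0"
  obtain B where B: "\<And>x. x \<in> Xopt \<Longrightarrow> norm x \<le> B"
    using compact_imp_bounded[OF compact_sol] by (auto simp: bounded_iff)
  define t where "t = (\<bar>B\<bar> + norm xs + 1) / norm p"
  have "t *\<^sub>R p \<in> Fs" using cone_Fs p by (simp add: cone_def t_def)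
  then have "xs + t *\<^sub>R p \<in> Fs" using convex_Fs cone_Fs xs_in_Fs convex_cone by blast
  moreover have "A (xs + t *\<^sub>R p) = b" using lin p A_xs by (simp add: linear_add linear_scale)
  ultimately have "norm (xs + t *\<^sub>R p) \<le> B" using B Xopt_eq by blast
  moreover have "norm (t *\<^sub>R p) = \<bar>B\<bar> + norm xs + 1" using p by (simp add: t_def)
  ultimately show False using norm_triangle_ineq4[of "xs + t *\<^sub>R p" xs] by simp
qed

text \<open>Pulling a point of the face towards the relative-interior solution \<open>xs\<close> while correcting
  its residual inside \<open>Vs\<close> produces a nearby solution.\<close>

lemma infdist_Xopt_le_correction:
  obtains e where "e > 0"
    "\<And>p w. p \<in> Fs \<Longrightarrow> w \<in> Vs \<Longrightarrow> A w = A p - b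
       \<Longrightarrow> infdist p Xopt \<le> (2 / e) * norm w * (norm p + norm xs) + norm w"
proof -
  obtain e where e: "e > 0" "\<And>z. z \<in> Vs \<Longrightarrow> norm (z - xs) < e \<Longrightarrow> z \<in> Fs"
    using Fs_contains_relative_ball by blast
  have "infdist p Xopt \<le> (2 / e) * norm w * (norm p + norm xs) + norm w"
    if p: "p \<in> Fs" and w: "w \<in> Vs" "A w = A p - b" for p w
  proof -
    obtain t where t: "0 \<le> t" "t \<le> 1" "t * e \<le> 2 * norm w"
      and q: "(1 - t) *\<^sub>R (p - w) + t *\<^sub>R xs \<in> Fs"
      using convex_pull_toward_relative_interior[OF convex_Fs subspace_Vs xs_in_Fs Fs_subset_Vs e p w(1)]
      by blast
    let ?q = "(1 - t) *\<^sub>R (p - w) + t *\<^sub>R xs"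
    have "A ?q = (1 - t) *\<^sub>R (A p - A w) + t *\<^sub>R A xs"
      using lin by (simp add: linear_add linear_scale linear_diff)
    also have "\<dots> = b" using w(2) A_xs by (simp add: scaleR_left_diff_distrib)
    finally have "A ?q = b" .
    then have "infdist p Xopt \<le> norm (t *\<^sub>R (p - xs) + (1 - t) *\<^sub>R w)"
      using infdist_le[of ?q Xopt p] q Xopt_eq by (simp add: dist_norm algebra_simps)
    also have "\<dots> \<le> t * (norm p + norm xs) + norm w"
      using t norm_triangle_ineq[of "t *\<^sub>R (p - xs)" "(1 - t) *\<^sub>R w"] norm_triangle_ineq4[of p xs]
        mult_left_mono[of "norm (p - xs)" "norm p + norm xs" t] mult_left_le_one_le[of "norm w" "1 - t"]
      by simp
    also have "\<dots> \<le> (2 / e) * norm w * (norm p + norm xs) + norm w"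
    proof -
      have "t \<le> (2 / e) * norm w" using t e by (simp add: field_simps)
      then show ?thesis using mult_right_mono[of t "(2 / e) * norm w" "norm p + norm xs"] by simp
    qed
    finally show ?thesis .
  qed
  then show ?thesis using that e(1) by blast
qed

text \<open>Near the solution set the residual is corrected inside \<open>Vs\<close>
  (distance of order \<open>r\<^sup>2 + r\<close>); far from it the trivial bound \<open>|p| + |xs|\<close> is already linear in \<open>r\<close>.\<close>

lemma face_error_bound:
  obtains C where "C \<ge> 0" "\<And>p. p \<in> Fs \<Longrightarrow> infdist p Xopt \<le> C * norm (A p - b)"
proof -
  obtain m where m: "m > 0" "\<forall>p\<in>Fs. m * norm p \<le> norm (A p)"
    using linear_bounded_below_on_cone[OF closed_Fs cone_Fs lin Fs_inter_kernel] by blast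
  obtain m1 where m1: "m1 > 0" "\<And>d. d \<in> Vs \<Longrightarrow> \<exists>w\<in>Vs. A w = A d \<and> m1 * norm w \<le> norm (A d)"
    using linear_bounded_preimage_in_subspace[OF subspace_Vs lin] by blast
  obtain e where e: "e > 0" "\<And>p w. p \<in> Fs \<Longrightarrow> w \<in> Vs \<Longrightarrow> A w = A p - b
      \<Longrightarrow> infdist p Xopt \<le> (2 / e) * norm w * (norm p + norm xs) + norm w"
    using infdist_Xopt_le_correction by blast
  define \<kappa> where "\<kappa> = 2 / (e * m1)"
  define \<beta> where "\<beta> = norm b / m + norm xs"
  have \<kappa>\<beta>: "\<kappa> > 0" "\<beta> \<ge> 0" using e m m1 by (auto simp: \<kappa>_def \<beta>_def)
  have "infdist p Xopt \<le> (\<kappa> * \<beta> + 1 / m + 1 / m1) * norm (A p - b)" if p: "p \<in> Fs" for p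
  proof -
    define r where "r = norm (A p - b)"
    have "p - xs \<in> Vs" using p xs_in_Fs Fs_subset_Vs subspace_Vs by (auto intro: subspace_diff)
    then obtain w where w: "w \<in> Vs" "A w = A p - b" "m1 * norm w \<le> r"
      using m1(2) lin A_xs by (force simp: r_def linear_diff)
    have "m * norm p \<le> r + norm b" using m(2) p norm_triangle_ineq2[of "A p" b] by (force simp: r_def)
    then have B: "norm p + norm xs \<le> \<beta> + 1 / m * r" using m(1) by (simp add: \<beta>_def field_simps)
    have far: "infdist p Xopt \<le> norm p + norm xs"
      using infdist_le[OF xs_sol, of p] norm_triangle_ineq4[of p xs] by (simp add: dist_norm)
    have w1: "norm w \<le> 1 / m1 * r" using w(3) m1(1) by (simp add: field_simps)
    then have "(2 / e) * norm w \<le> (2 / e) * (1 / m1 * r)" using e(1) by (intro mult_left_mono) auto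
    then have "(2 / e) * norm w * (norm p + norm xs) \<le> \<kappa> * r * (norm p + norm xs)"
      by (intro mult_right_mono) (auto simp: \<kappa>_def)
    then have near: "infdist p Xopt \<le> \<kappa> * r * (norm p + norm xs) + 1 / m1 * r"
      using e(2)[OF p w(1,2)] w1 by linarith
    show ?thesis
      unfolding r_def[symmetric]
      by (rule le_linear_of_near_far_bounds[OF _ _ _ _ _ B far near]) (use \<kappa>\<beta> m(1) m1(1) in \<open>auto simp: r_def\<close>)
  qed
  then show ?thesis using that[of "\<kappa> * \<beta> + 1 / m + 1 / m1"] \<kappa>\<beta> m(1) m1(1) by simp
qed

lemma infdist_Xopt_le_via_face_point:
  assumes C: "C \<ge> 0" "\<And>p. p \<in> Fs \<Longrightarrow> infdist p Xopt \<le> C * norm (A p - b)" and p: "p \<in> Fs"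
  shows "infdist x Xopt \<le> C * norm (A x - b) + (1 + C * sigma_max A) * norm (x - p)"
proof -
  have "A p - b = (A x - b) - A (x - p)" using lin by (simp add: linear_diff)
  then have "norm (A p - b) \<le> norm (A x - b) + norm (A (x - p))" by (metis norm_triangle_ineq4)
  then have "norm (A p - b) \<le> norm (A x - b) + sigma_max A * norm (x - p)"
    using norm_le_sigma_max[OF lin, of "x - p"] by linarith
  then have "C * norm (A p - b) \<le> C * (norm (A x - b) + sigma_max A * norm (x - p))"
    using C(1) by (rule mult_left_mono)
  moreover have "infdist x Xopt \<le> infdist p Xopt + norm (x - p)"
    using infdist_triangle[of x Xopt p] by (simp add: dist_norm)
  ultimately show ?thesis using C(2)[OF p] by (simp add: algebra_simps)
qed

lemma face_projection_decomposition:
  fixes x :: 'e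
  defines "p \<equiv> closest_point Fs (pos_part K x)" and "n \<equiv> neg_part K x"
  shows "p \<in> Fs"
    and "x - (p + closest_point Vs n) = (pos_part K x - p) + closest_point (orthogonal_comp Vs) n"
    and "norm (pos_part K x - p) = infdist (pos_part K x) Fs"
proof -
  show "p \<in> Fs" unfolding p_def using closed_Fs zero_in_Fs by (intro closest_point_in_set) auto
  show "x - (p + closest_point Vs n) = (pos_part K x - p) + closest_point (orthogonal_comp Vs) n"
    by (simp add: closest_point_orthogonal_comp[OF subspace_Vs] n_def pos_part_def neg_part_def)
  show "norm (pos_part K x - p) = infdist (pos_part K x) Fs" unfolding p_def
    using dist_closest_point_eq_infdist[OF closed_Fs, of "pos_part K x"] zero_in_Fs by (auto simp: dist_norm)
qed

lemma error_bound:
  assumes FB: "\<And>x. infdist (pos_part K x) Fs \<le> f x"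
  shows "\<exists>\<gamma> \<gamma>'. \<gamma> \<ge> 0 \<and> \<gamma>' \<ge> 0 \<and>
           (\<forall>x. infdist x Xopt
                 \<le> (1 + \<gamma> * sigma_max A) * f x + \<gamma> * norm (A x - b)
                   + (1 + \<gamma> * sigma_max A) * norm (closest_point (Vs\<^sup>\<bottom>) (neg_part K x))
                   + \<gamma>' * norm (closest_point Vs (neg_part K x)))"
proof -
  obtain C where C: "C \<ge> 0" "\<And>p. p \<in> Fs \<Longrightarrow> infdist p Xopt \<le> C * norm (A p - b)"
    using face_error_bound by blast
  let ?\<kappa> = "1 + C * sigma_max A"
  have \<kappa>: "?\<kappa> \<ge> 0" using C(1) sigma_max_nonneg[OF lin] by simp
  have "infdist x Xopt \<le> ?\<kappa> * f x + C * norm (A x - b)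
          + ?\<kappa> * norm (closest_point (Vs\<^sup>\<bottom>) (neg_part K x)) + ?\<kappa> * norm (closest_point Vs (neg_part K x))"
    for x
  proof -
    let ?p = "closest_point Fs (pos_part K x)"
    note dec = face_projection_decomposition[of x]
    have eq: "x - ?p = (pos_part K x - ?p) + closest_point (Vs\<^sup>\<bottom>) (neg_part K x) + closest_point Vs (neg_part K x)"
      using dec(2) by (simp add: algebra_simps)
    have "norm (x - ?p) \<le> f x + norm (closest_point (Vs\<^sup>\<bottom>) (neg_part K x)) + norm (closest_point Vs (neg_part K x))"
      unfolding eq using dec(3) FB[of x] norm_triangle_ineq[of "pos_part K x - ?p" "closest_point (Vs\<^sup>\<bottom>) (neg_part K x)"]
        norm_triangle_ineq[of "pos_part K x - ?p + closest_point (Vs\<^sup>\<bottom>) (neg_part K x)" "closest_point Vs (neg_part K x)"]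
      by linarith
    then show ?thesis
      using infdist_Xopt_le_via_face_point[OF C dec(1), of x] mult_left_mono[OF _ \<kappa>] by (fastforce simp: algebra_simps)
  qed
  then show ?thesis using C(1) \<kappa> by blast
qed

lemma kernel_trivial_on_Vs_if_unique:
  assumes unique: "Xopt = {x0}" and d: "d \<in> Vs" "A d = 0"
  shows "d = 0"
proof (rule ccontr)
  assume "d \<noteq> 0"
  obtain e where e: "e > 0" "\<And>z. z \<in> Vs \<Longrightarrow> norm (z - xs) < e \<Longrightarrow> z \<in> Fs"
    using Fs_contains_relative_ball by blast
  define z where "z = xs + (e / 2 / norm d) *\<^sub>R d"
  have "z \<in> Vs" using xs_in_Fs Fs_subset_Vs subspace_Vs d by (auto simp: z_def intro: subspace_add subspace_scale)
  then have "z \<in> Fs" using e \<open>d \<noteq> 0\<close> by (simp add: z_def)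
  moreover have "A z = b" using lin d A_xs by (simp add: z_def linear_add linear_scale)
  ultimately have "z \<in> Xopt" using Xopt_eq by blast
  then have "z = xs" using unique xs_sol by (metis singletonD)
  then show False using \<open>d \<noteq> 0\<close> e(1) by (simp add: z_def)
qed

lemma error_bound_unique:
  assumes FB: "\<And>x. infdist (pos_part K x) Fs \<le> f x" and unique: "Xopt = {x0}"
  shows "infdist x Xopt
           \<le> (1 + (1 / sigma_min_on A Vs) * sigma_max A) * f x + (1 / sigma_min_on A Vs) * norm (A x - b)
             + (1 + (1 / sigma_min_on A Vs) * sigma_max A) * norm (closest_point (Vs\<^sup>\<bottom>) (neg_part K x))"
proof -
  let ?g = "1 / sigma_min_on A Vs"
  let ?p = "closest_point Fs (pos_part K x)"
  let ?u = "?p + closest_point Vs (neg_part K x)"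
  note dec = face_projection_decomposition[of x]
  have g: "?g \<ge> 0" using sigma_min_on_nonneg[OF subspace_Vs] by simp
  have "?u \<in> Vs" using dec(1) Fs_subset_Vs subspace_Vs closest_point_subspace(1)[OF subspace_Vs]
    by (auto intro: subspace_add)
  then have "norm (?u - xs) \<le> ?g * norm (A (?u - xs))"
    using norm_le_sigma_min_on[OF subspace_Vs lin kernel_trivial_on_Vs_if_unique[OF unique]]
      xs_in_Fs Fs_subset_Vs subspace_Vs by (auto intro: subspace_diff)
  also have "A (?u - xs) = (A x - b) - A (x - ?u)" using lin A_xs by (simp add: linear_diff)
  also have "?g * norm \<dots> \<le> ?g * (norm (A x - b) + sigma_max A * norm (x - ?u))"
    using g norm_le_sigma_max[OF lin, of "x - ?u"] norm_triangle_ineq4[of "A x - b" "A (x - ?u)"]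
    by (intro mult_left_mono) auto
  finally have ux: "norm (?u - xs) \<le> ?g * norm (A x - b) + ?g * sigma_max A * norm (x - ?u)"
    by (simp add: algebra_simps)
  have xu: "norm (x - ?u) \<le> f x + norm (closest_point (Vs\<^sup>\<bottom>) (neg_part K x))"
    unfolding dec(2) using dec(3) FB[of x] norm_triangle_ineq[of "pos_part K x - ?p" "closest_point (Vs\<^sup>\<bottom>) (neg_part K x)"]
    by simp
  have "infdist x Xopt = norm (x - xs)" using unique xs_sol by (simp add: dist_norm)
  also have "\<dots> \<le> norm (x - ?u) + norm (?u - xs)" using norm_triangle_ineq[of "x - ?u" "?u - xs"] by simp
  also have "\<dots> \<le> ?g * norm (A x - b) + (1 + ?g * sigma_max A) * norm (x - ?u)"
    using ux by (simp add: algebra_simps)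
  also have "\<dots> \<le> ?g * norm (A x - b) + (1 + ?g * sigma_max A) * (f x + norm (closest_point (Vs\<^sup>\<bottom>) (neg_part K x)))"
    using xu g sigma_max_nonneg[OF lin] by (simp add: mult_left_mono)
  finally show ?thesis by (simp add: algebra_simps)
qed

lemma face_dist_case_zero:
  assumes "case_zero K s f"
  shows "infdist (pos_part K x) Fs \<le> f x"
proof -
  have "pos_part K x \<in> Fs" using assms pos_part_in_K by (simp add: case_zero_def compl_face_def)
  then show ?thesis using assms by (simp add: case_zero_def infdist_zero)
qed

lemma face_dist_case_interior:
  assumes "case_interior K s f"
  shows "infdist (pos_part K x) Fs \<le> f x"
proof -
  have "infdist (pos_part K x) Fs \<le> norm (pos_part K x)"
    using infdist_le[OF zero_in_Fs, of "pos_part K x"] by simp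
  also have "\<dots> \<le> interior_const K s * (s \<bullet> pos_part K x)"
    using assms pos_part_in_K by (intro norm_le_interior_const) (auto simp: case_interior_def)
  finally show ?thesis using assms by (simp add: case_interior_def)
qed

lemma face_dist_case_orthant:
  fixes T :: "'e \<Rightarrow> real^'n"
  assumes "case_orthant K s f T"
  shows "infdist (pos_part K x) Fs \<le> f x"
proof -
  have T: "isometric_onto T UNIV" and K: "K = T -` {v. \<forall>i. 0 \<le> v $ i}" and "s \<noteq> 0"
    and f: "f x = (s \<bullet> pos_part K x) / Inf {T s $ i | i. T s $ i \<noteq> 0}"
    using assms by (auto simp: case_orthant_def)
  have "0 \<le> T s $ i" for i
  proof -
    have "(axis i 1 :: real^'n) \<in> {v. \<forall>i. 0 \<le> v $ i}" by (simp add: axis_def)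
    then have "0 \<le> T s \<bullet> axis i 1" using dual_cone_via_isometry[OF T K s_in_dual_cone] by simp
    then show ?thesis by (simp add: inner_axis)
  qed
  moreover have "T s \<noteq> 0" using \<open>s \<noteq> 0\<close> isometric_ontoD(4)[OF T, of s] by auto
  moreover have "T y $ i \<ge> 0" if "y \<in> K" for y i using that K by auto
  then have "0 \<le> T (pos_part K x) $ i" for i using pos_part_in_K by blast
  ultimately obtain z where z: "\<forall>i. 0 \<le> z $ i" "T s \<bullet> z = 0"
    "norm (T (pos_part K x) - z) \<le> (T s \<bullet> T (pos_part K x)) / Inf {T s $ i | i. T s $ i \<noteq> 0}"
    using orthant_face_approximation[of "T s" "T (pos_part K x)"] by blast
  have "infdist (pos_part K x) Fs \<le> norm (T (pos_part K x) - z)"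
    using infdist_compl_face_via_isometry[OF T K _ _ z(2)] z(1) by auto
  then show ?thesis using z(3) f isometric_ontoD(2)[OF T] by simp
qed

lemma face_dist_case_soc:
  fixes T :: "'e \<Rightarrow> (real^'n) \<times> real"
  assumes "case_soc K s f T"
  shows "infdist (pos_part K x) Fs \<le> f x"
proof -
  have T: "isometric_onto T UNIV" and K: "K = T -` {(u, t). norm u \<le> t}"
    and f: "f x = sqrt (2 * sqrt 2 * norm x * (s \<bullet> pos_part K x) / norm s)"
    using assms by (auto simp: case_soc_def)
  obtain a where Ts: "T s = (a, norm a)" and a: "norm a > 0"
    using soc_frontier_dual_point[OF T K _ s_in_dual_cone] assms by (auto simp: case_soc_def)
  obtain u \<tau> where Ty: "T (pos_part K x) = (u, \<tau>)" by fastforce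
  have "T y \<in> {(u, t). norm u \<le> t}" if "y \<in> K" for y using that K by auto
  from this[OF pos_part_in_K[of x]] have "norm u \<le> \<tau>" using Ty by simp
  then obtain z where z: "z \<in> {(u, t). norm u \<le> t}" "(a, norm a) \<bullet> z = 0"
      "(norm ((u, \<tau>) - z))\<^sup>2 \<le> 2 * \<tau> * (\<tau> + (a \<bullet> u) / norm a)"
    using soc_face_approximation[OF refl a] by blast
  define E where "E = \<tau> + (a \<bullet> u) / norm a"
  have sy: "s \<bullet> pos_part K x = norm a * E"
    using isometric_ontoD(2)[OF T, of s "pos_part K x"] Ts Ty a by (simp add: E_def field_simps)
  then have "0 \<le> E" using inner_s_nonneg[OF pos_part_in_K[of x]] a by (simp add: zero_le_mult_iff)
  have "\<tau> \<le> norm (T (pos_part K x))" using Ty norm_snd_le[of \<tau> u] by simp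
  also have "\<dots> \<le> norm x" using isometric_ontoD(4)[OF T] pos_part_residual(3) by simp
  finally have "(norm (T (pos_part K x) - z))\<^sup>2 \<le> 2 * norm x * E"
    using z(3) \<open>0 \<le> E\<close> Ty mult_right_mono[of \<tau> "norm x" E] by (simp add: E_def)
  also have "norm s = sqrt 2 * norm a"
    using isometric_ontoD(4)[OF T, of s] Ts by (simp add: norm_Pair real_sqrt_mult)
  then have "2 * norm x * E = 2 * sqrt 2 * norm x * (s \<bullet> pos_part K x) / norm s"
    using sy a by simp
  finally have "norm (T (pos_part K x) - z) \<le> f x" using f by (simp add: real_le_rsqrt)
  moreover have "infdist (pos_part K x) Fs \<le> norm (T (pos_part K x) - z)"
    using infdist_compl_face_via_isometry[OF T K _ z(1)] z(2) Ts by simp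
  ultimately show ?thesis by linarith
qed

lemma psd_case_projection_residual:
  fixes T :: "'e \<Rightarrow> real^'n^'n"
  assumes T: "isometric_onto T {M. transpose M = M}" and K: "K = T -` {M. psd M}"
  shows "psd (T (pos_part K x) - T x)" and "(T (pos_part K x) - T x) \<bullet> T (pos_part K x) = 0"
proof -
  let ?H = "T (pos_part K x) - T x"
  have lin: "linear T" using isometric_ontoD(1)[OF T] .
  have H: "?H = T (pos_part K x - x)" using lin by (simp add: linear_diff)
  have "transpose (T z) = T z" for z using isometric_ontoD(3)[OF T] by auto
  then have "transpose ?H = ?H" by (simp add: transpose_def vec_eq_iff)
  moreover have "0 \<le> v \<bullet> (?H *v v)" for v
  proof -
    obtain k where k: "T k = outer v v"
      using isometric_ontoD(3)[OF T] transpose_outer_self[of v] by (metis (mono_tags) imageE mem_Collect_eq)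
    have "k \<in> K" using K k psd_outer_self by simp
    then have "0 \<le> (pos_part K x - x) \<bullet> k" using pos_part_residual(2)[of k x] by (simp add: inner_diff_left)
    then show ?thesis using isometric_ontoD(2)[OF T, of "pos_part K x - x" k] k H by (simp add: inner_outer)
  qed
  ultimately show "psd ?H" by (simp add: psd_def)
  have "(pos_part K x - x) \<bullet> pos_part K x = 0" using pos_part_residual(1)[of x] by (simp add: inner_diff_left)
  then show "?H \<bullet> T (pos_part K x) = 0" using isometric_ontoD(2)[OF T] H by simp
qed

lemma psd_case_pos_part_bound:
  fixes T :: "'e \<Rightarrow> real^'n^'n" and w :: "nat \<Rightarrow> real^'n"
  assumes T: "isometric_onto T {M. transpose M = M}" and K: "K = T -` {M. psd M}"
    and Y: "T (pos_part K x) = (\<Sum>k<m. outer (w k) (w k))"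
  shows "(norm (T (pos_part K x) *v u))\<^sup>2 \<le> onorm (\<lambda>v. T x *v v) * (u \<bullet> (T (pos_part K x) *v u))"
proof (rule psd_norm_mult_sq_le)
  let ?Y = "T (pos_part K x)"
  show "psd ?Y" using pos_part_in_K[of x] K by auto
  note H = psd_case_projection_residual[OF T K, of x]
  have "T x *v w k = ?Y *v w k" if "k < m" for k
    using psd_mult_eq_zero_if_orthogonal[OF H(1) _ that] H(2) Y by (simp add: matrix_vector_mult_diff_rdistrib)
  then show "norm (?Y *v v) \<le> onorm (\<lambda>v. T x *v v) * norm v" for v
    using norm_sum_outer_mult_le_onorm[of "T x" w m "T x - ?Y"] Y by (simp add: matrix_vector_mult_diff_rdistrib)
qed

lemma face_dist_case_psd:
  fixes T :: "'e \<Rightarrow> real^'n^'n"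
  assumes "case_psd K s f T"
  shows "infdist (pos_part K x) Fs \<le> f x"
proof -
  have T: "isometric_onto T {M. transpose M = M}" and K: "K = T -` {M. psd M}" and "s \<noteq> 0"
    and f: "f x = (s \<bullet> pos_part K x) / min_nonzero_eig (T s)
              + sqrt (2 * ((s \<bullet> pos_part K x) / min_nonzero_eig (T s)) * onorm (\<lambda>v. T x *v v))"
    using assms by (auto simp: case_psd_def)
  let ?S = "T s" and ?Y = "T (pos_part K x)" and ?L = "onorm (\<lambda>v. T x *v v)"
  have sym: "transpose (T z) = T z" for z using isometric_ontoD(3)[OF T] by auto
  have psd_K: "psd (T y)" if "y \<in> K" for y using that K by auto
  have "0 \<le> v \<bullet> (?S *v v)" for v
  proof -
    have "0 \<le> ?S \<bullet> outer v v"
      by (intro dual_cone_via_isometry[OF T K s_in_dual_cone]) (simp_all add: transpose_outer_self psd_outer_self)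
    then show ?thesis by (simp add: inner_outer)
  qed
  then have S: "psd ?S" "?S \<noteq> 0"
    using sym \<open>s \<noteq> 0\<close> isometric_ontoD(4)[OF T, of s] by (auto simp: psd_def)
  obtain m :: nat and w where Y: "?Y = (\<Sum>k<m. outer (w k) (w k))"
    using psd_sum_outer_decomposition psd_K[OF pos_part_in_K] by blast
  note bound = psd_case_pos_part_bound[OF T K Y]
  have "0 \<le> ?L" by (rule onorm_pos_le) (simp add: linear_conv_bounded_linear)
  then obtain Z where Z: "psd Z" "?S \<bullet> Z = 0" "norm (?Y - Z) \<le> sqrt (2 * ((?S \<bullet> ?Y) / min_nonzero_eig ?S) * ?L)"
    using psd_face_approximation[OF S Y bound] by blast
  have "infdist (pos_part K x) Fs \<le> norm (?Y - Z)"
    using infdist_compl_face_via_isometry[OF T K _ _ Z(2)] Z(1) by (simp add: psd_def)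
  also have "\<dots> \<le> f x"
  proof -
    have "0 \<le> (s \<bullet> pos_part K x) / min_nonzero_eig ?S"
      using psd_min_nonzero_eig(1)[OF S] inner_s_nonneg[OF pos_part_in_K[of x]] by simp
    moreover have "?S \<bullet> ?Y = s \<bullet> pos_part K x" by (rule isometric_ontoD(2)[OF T])
    ultimately show ?thesis using Z(3) f by simp
  qed
  finally show ?thesis .
qed

end

theorem corollary1:
  fixes K :: "'e::euclidean_space set" and A :: "'e \<Rightarrow> 'f::euclidean_space"
    and b :: 'f and c :: 'e and xs :: 'e and ys :: 'f and s :: 'e and f :: "'e \<Rightarrow> real"
  assumes proper: "proper_cone K"
    and lin: "linear A"
    and xs_sol: "xs \<in> primal_solutions A b c K"
    and ys_sol: "ys \<in> dual_solutions A b c K"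
    and compact_sol: "compact (primal_solutions A b c K)"
    and s_def: "s = c - adjoint A ys"
    and compl: "s \<bullet> xs = 0"
    and strict_compl: "xs \<in> rel_interior (compl_face K s)"
    and cases: "case_zero K s f \<or> case_interior K s f
       \<or> (\<exists>T :: 'e \<Rightarrow> real^'n1. case_orthant K s f T)
       \<or> (\<exists>T :: 'e \<Rightarrow> (real^'n2::finite) \<times> real. case_soc K s f T)
       \<or> (\<exists>T :: 'e \<Rightarrow> real^'n3^'n3. case_psd K s f T)"
  shows "(\<exists>\<gamma> \<gamma>'. \<gamma> \<ge> 0 \<and> \<gamma>' \<ge> 0 \<and>
           (\<forall>x. infdist x (primal_solutions A b c K)
                 \<le> (1 + \<gamma> * sigma_max A) * f x + \<gamma> * norm (A x - b)
                   + (1 + \<gamma> * sigma_max A)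
                       * norm (closest_point ((compl_space K s)\<^sup>\<bottom>) (neg_part K x))
                   + \<gamma>' * norm (closest_point (compl_space K s) (neg_part K x))))
       \<and> ((\<exists>x0. primal_solutions A b c K = {x0}) \<longrightarrow>
           (\<forall>x. infdist x (primal_solutions A b c K)
                 \<le> (1 + (1 / sigma_min_on A (compl_space K s)) * sigma_max A) * f x
                   + (1 / sigma_min_on A (compl_space K s)) * norm (A x - b)
                   + (1 + (1 / sigma_min_on A (compl_space K s)) * sigma_max A)
                       * norm (closest_point ((compl_space K s)\<^sup>\<bottom>) (neg_part K x))))
       \<and> (\<forall>x. s \<bullet> pos_part K x
              = (c \<bullet> x - primal_value A b c K) + ys \<bullet> (b - A x) - s \<bullet> neg_part K x)"
proof -
  interpret strictly_complementary_pair K A b c xs ys s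
    using proper lin xs_sol ys_sol compact_sol s_def compl strict_compl
    unfolding strictly_complementary_pair_def by blast
  have face_dist: "infdist (pos_part K x) (compl_face K s) \<le> f x" for x
    using cases
    by (elim disjE exE) (blast intro: face_dist_case_zero face_dist_case_interior
        face_dist_case_orthant face_dist_case_soc face_dist_case_psd)+
  show ?thesis
    using error_bound[OF face_dist] error_bound_unique[OF face_dist] gap_identity by blast
qed

end
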